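(* Assume (A1), (A2) and (A4) below, and let $\varepsilon_\diamond$ be as below. Fix $0<\alpha<1/2$, let $\varepsilon_n=\varepsilon_\diamond n^{-\alpha}$ for $n\in\mathbb{N}_+$, and define the events $$\mathcal{E}_n=\big\{\omega:\|\mathbf{F}_{\omega,n}(\mathbf{a})-\mathbb{F}(\mathbf{a})\|_2<\varepsilon_n\ \forall\mathbf{a}\in\operatorname{cl}\mathbb{B}_R^N\big\}\cap\big\{\omega:\mathbb{A}_{-\varepsilon_n}\subseteq A_{\omega,n}\subseteq\mathbb{A}_{\varepsilon_n}\big\}.$$ Then $\mathbb{P}\{\limsup_{n\to\infty}\mathcal{E}_n^c\}=\mathbb{P}\{\mathcal{E}_n^c\text{ infinitely often}\}=0$. Consequently there exists $\tilde\Omega\subseteq\Omega$ with $\mathbb{P}(\tilde\Omega)=1$ such that for every $\omega\in\tilde\Omega$ there is $n_\omega\in\mathbb{N}_+$ with $\omega\in\mathcal{E}_n$ for all $n>n_\omega$.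
   Context: Setting. $(\Omega,\mathcal{F},\mathbb{P})$ is a probability space; $N,d\in\mathbb{N}_+$, $R>0$, $\lambda>0$. $\mathcal{X}\subseteq\mathbb{R}^{n_x}$, $\mathcal{Y}\subseteq\mathbb{R}^{n_y}$ are compact; $X:\Omega\to\mathcal{X}$, $Y:\Omega\to\mathcal{Y}$ are random variables. $\phi_1,\dots,\phi_d$ are continuous on $\mathcal{X}$, $\Phi^d(x)=[\phi_l(x)]_{l=1}^d$. $\mathbb{B}_R=\{a\in\mathbb{R}^d:\|a\|_2<R\}$, $\operatorname{cl}\mathbb{B}_R$ its closure, $\operatorname{cl}\mathbb{B}_R^N=\prod_{i=1}^N\operatorname{cl}\mathbb{B}_R\subseteq\mathbb{R}^{Nd}$. A profile $\mathbf{a}=[a^1;\dots;a^N]$, $a^i\in\mathbb{R}^d$, defines $\hat z^i(x)=\sum_l a^i_l\phi_l(x)$ and $\hat z^{-i}(x)$ (stack over $j\neq i$). $\hat{\mathcal{Z}}^i=\bigcup\{\hat z^i(\mathcal{X}):a^i\in\operatorname{cl}\mathbb{B}_R\}$, $\hat{\mathcal{Z}}=\prod_i\hat{\mathcal{Z}}^i$. Player $i$ has objective $J^i(z^i;y,z^{-i})$ (derivative $\partial J^i$ in $z^i$) and constraint $h^i:\hat{\mathcal{Z}}^i\times\mathcal{Y}\to\mathbb{R}$. $F(z;y)=[\partial J^i(z^i;y,z^{-i})]_i$; $\mathbf{F}(\mathbf{a};x,y)=[\partial J^i(\hat z^i(x);y,\hat z^{-i}(x))\Phi^d(x)]_i\in\mathbb{R}^{Nd}$;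 $\mathbb{F}^0(\mathbf{a})=\mathbb{E}[\mathbf{F}(\mathbf{a};X,Y)]$, $\mathbb{F}(\mathbf{a})=\mathbb{F}^0(\mathbf{a})+\lambda\mathbf{a}$; $\mathbf{h}^i(a^i;x,y)=h^i(\hat z^i(x);y)$; $\bar h^i(a^i)=\mathbb{E}[\mathbf{h}^i(a^i;X,Y)]$. $(X^k,Y^k)_{k\ge1}$ are i.i.d. copies of $(X,Y)$ on $\Omega$; $\mathbf{F}_{\omega,n}(\mathbf{a})=\frac1n\sum_{k=1}^n\mathbf{F}(\mathbf{a};X^k(\omega),Y^k(\omega))+\lambda\mathbf{a}$, $\mathbf{h}^i_{\omega,n}(a^i)=\frac1n\sum_{k=1}^n\mathbf{h}^i(a^i;X^k(\omega),Y^k(\omega))$. For $\varepsilon\in\mathbb{R}$: $\mathbb{A}^i_\varepsilon=\{a^i\in\operatorname{cl}\mathbb{B}_R:\bar h^i(a^i)\le\varepsilon\}$, $\mathbb{A}_\varepsilon=\prod_i\mathbb{A}^i_\varepsilon$; $A^i_{\omega,n}=\{a^i\in\operatorname{cl}\mathbb{B}_R:\mathbf{h}^i_{\omega,n}(a^i)\le0\}$, $A_{\omega,n}=\prod_iA^i_{\omega,n}$. (A1) Each $J^i(\cdot;y,z^{-i})$ is continuously differentiable. (A2) For all $y$, $F(\cdot;y)$ is $L_F$-Lipschitz on $\hat{\mathcal{Z}}$ and each $h^i(\cdot;y)$ is $L_h$-Lipschitz on $\hat{\mathcal{Z}}^i$; some $z\in\hat{\mathcal{Z}}$ has $F(z;\mathcal{Y})$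 and all $h^i(z^i;\mathcal{Y})$ bounded. (A4) There is $\varepsilon_h>0$ with $\{a^i\in\operatorname{cl}\mathbb{B}_R:\bar h^i(a^i)\le-\varepsilon_h\}\ne\varnothing$ for every $i$. The constant $\varepsilon_\diamond\in(0,\varepsilon_h)$: for every $\mathbf{a}\in\operatorname{cl}\mathbb{B}_R^N$, each centered random variable $W$ of the form $[\mathbf{F}(\mathbf{a};X,Y)]_l-[\mathbb{F}^0(\mathbf{a})]_l$ or $\mathbf{h}^i(a^i;X,Y)-\bar h^i(a^i)$, with variance $\sigma^2$, has rate function $I(u)=\sup_t\{tu-\log\mathbb{E}[e^{tW}]\}$ satisfying $I(u)\ge u^2/(3\sigma^2)$ for $0<u\le\varepsilon_\diamond$. *)

theory Defs
  imports "HOL-Probability.Probability"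
begin

text \<open>Players are indexed by a finite type 'n (N = CARD('n)), basis functions by a
finite type 'd (d = CARD('d)).  A profile a is an element of real^'d^'n, so that
a $ i is the block a^i in R^d and the norm of a is the Euclidean norm on R^(N d).\<close>

definition vupd :: "real^'n \<Rightarrow> 'n \<Rightarrow> real \<Rightarrow> real^'n" where
  "vupd z i t = (\<chi> j. if j = i then t else z $ j)"

text \<open>J i z y stands for J^i(z^i; y, z^{-i}) (the i-th entry of z is z^i).\<close>
definition dJ :: "('n \<Rightarrow> real^'n \<Rightarrow> 'y \<Rightarrow> real) \<Rightarrow> 'n \<Rightarrow> real^'n \<Rightarrow> 'y \<Rightarrow> real" where
  "dJ J i z y = deriv (\<lambda>t. J i (vupd z i t) y) (z $ i)"

definition Fz :: "('n \<Rightarrow> real^'n \<Rightarrow> 'y \<Rightarrow> real) \<Rightarrow> real^'n \<Rightarrow> 'y \<Rightarrow> real^'n" where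
  "Fz J z y = (\<chi> i. dJ J i z y)"

definition zi :: "('d::finite \<Rightarrow> 'x \<Rightarrow> real) \<Rightarrow> real^'d::finite \<Rightarrow> 'x \<Rightarrow> real" where
  "zi \<phi> ai x = (\<Sum>l\<in>UNIV. ai $ l * \<phi> l x)"

definition zhat :: "('d::finite \<Rightarrow> 'x \<Rightarrow> real) \<Rightarrow> real^'d^'n \<Rightarrow> 'x \<Rightarrow> real^'n" where
  "zhat \<phi> a x = (\<chi> i. zi \<phi> (a $ i) x)"

definition Zi :: "('d::finite \<Rightarrow> 'x \<Rightarrow> real) \<Rightarrow> 'x set \<Rightarrow> real \<Rightarrow> real set" where
  "Zi \<phi> XX R = (\<Union>ai \<in> cball (0::real^'d) R. zi \<phi> ai ` XX)"

definition Zhat :: "('d::finite \<Rightarrow> 'x \<Rightarrow> real) \<Rightarrow> 'x set \<Rightarrow> real \<Rightarrow> (real^'n) set" where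
  "Zhat \<phi> XX R = {z. \<forall>i. z $ i \<in> Zi \<phi> XX R}"

definition clBN :: "real \<Rightarrow> (real^'d^'n) set" where
  "clBN R = {a. \<forall>i. a $ i \<in> cball 0 R}"

definition Fb :: "('n \<Rightarrow> real^'n \<Rightarrow> 'y \<Rightarrow> real) \<Rightarrow> ('d::finite \<Rightarrow> 'x \<Rightarrow> real)
    \<Rightarrow> real^'d^'n \<Rightarrow> 'x \<Rightarrow> 'y \<Rightarrow> real^'d^'n" where
  "Fb J \<phi> a x y = (\<chi> i. \<chi> l. dJ J i (zhat \<phi> a x) y * \<phi> l x)"

definition FF0 where
  "FF0 M J \<phi> X Y a = integral\<^sup>L M (\<lambda>\<omega>. Fb J \<phi> a (X \<omega>) (Y \<omega>))"

definition FF where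
  "FF M J \<phi> X Y lam a = FF0 M J \<phi> X Y a + lam *\<^sub>R a"

definition hbar where
  "hbar M h \<phi> X Y i ai = integral\<^sup>L M (\<lambda>\<omega>. h i (zi \<phi> ai (X \<omega>)) (Y \<omega>))"

definition Femp where
  "Femp J \<phi> Xs Ys lam \<omega> (n::nat) a =
     (1 / real n) *\<^sub>R (\<Sum>k=1..n. Fb J \<phi> a (Xs k \<omega>) (Ys k \<omega>)) + lam *\<^sub>R a"

definition hemp where
  "hemp h \<phi> Xs Ys i \<omega> (n::nat) ai = (1 / real n) * (\<Sum>k=1..n. h i (zi \<phi> ai (Xs k \<omega>)) (Ys k \<omega>))"

definition AAeps where
  "AAeps M h \<phi> X Y R eps = {a. \<forall>i. a $ i \<in> cball 0 R \<and> hbar M h \<phi> X Y i (a $ i) \<le> eps}"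

definition Aemp where
  "Aemp h \<phi> Xs Ys R \<omega> n = {a. \<forall>i. a $ i \<in> cball 0 R \<and> hemp h \<phi> Xs Ys i \<omega> n (a $ i) \<le> 0}"

definition rate_fun :: "'a measure \<Rightarrow> ('a \<Rightarrow> real) \<Rightarrow> real \<Rightarrow> ereal" where
  "rate_fun M W u = (SUP t. ereal (t * u - ln (integral\<^sup>L M (\<lambda>\<omega>. exp (t * W \<omega>)))))"

definition var_of :: "'a measure \<Rightarrow> ('a \<Rightarrow> real) \<Rightarrow> real" where
  "var_of M W = integral\<^sup>L M (\<lambda>\<omega>. (W \<omega> - integral\<^sup>L M W)\<^sup>2)"

definition rate_lb :: "'a measure \<Rightarrow> ('a \<Rightarrow> real) \<Rightarrow> real \<Rightarrow> bool" where
  "rate_lb M W e \<longleftrightarrow>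
     (\<forall>u. 0 < u \<and> u \<le> e \<longrightarrow> rate_fun M W u \<ge> ereal (u\<^sup>2 / (3 * var_of M W)))"

definition event_E where
  "event_E M J h \<phi> X Y Xs Ys lam R epsn n =
     {\<omega> \<in> space M.
        (\<forall>a \<in> clBN R. norm (Femp J \<phi> Xs Ys lam \<omega> n a - FF M J \<phi> X Y lam a) < epsn)
      \<and> AAeps M h \<phi> X Y R (- epsn) \<subseteq> Aemp h \<phi> Xs Ys R \<omega> n
      \<and> Aemp h \<phi> Xs Ys R \<omega> n \<subseteq> AAeps M h \<phi> X Y R epsn}"

end

theory Submission
  imports Defs "HOL-Real_Asymp.Real_Asymp"
begin

text \<open>The integrands \<open>Fb J \<phi> a x y $ i $ l\<close> and \<open>h i (zi \<phi> (a $ i) x) y\<close> are bounded and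
  Lipschitz in the coefficients \<open>a\<close>, uniformly in \<open>(x, y) \<in> XX \<times> YY\<close>, by (A2), the compactness
  of the data sets and the continuity of the basis functions. Hoeffding's inequality at the
  points of a net of mesh \<open>n powr - \<alpha>\<close>, which needs only polynomially many points, and a union
  bound show that an \<open>\<epsilon>\<^sub>n\<close>-deviation at some net point has probability at most a polynomial in
  \<open>n\<close> times \<open>exp (- \<kappa> * n powr (1 - 2 * \<alpha>))\<close>. This is summable because \<open>\<alpha> < 1/2\<close>, so by
  Borel-Cantelli almost surely only finitely many such deviations occur, and the Lipschitz bound
  extends the estimate from the net to the whole ball. Uniform \<open>\<epsilon>\<^sub>n\<close>-closeness of the empirical
  constraint functions then places \<open>Aemp\<close> between \<open>AAeps (- \<epsilon>\<^sub>n)\<close> and \<open>AAeps \<epsilon>\<^sub>n\<close>.\<close>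

section \<open>Nets of polynomial size\<close>

lemma abs_round_le_ceiling:
  fixes x r :: real
  assumes "\<bar>x\<bar> \<le> r"
  shows "\<bar>round x\<bar> \<le> \<lceil>r\<rceil>"
proof -
  have "round x \<le> \<lceil>r\<rceil>"
    using of_int_round_le[of x] le_of_int_ceiling[of r] assms by (simp add: round_def) linarith
  moreover have "- \<lceil>r\<rceil> \<le> round x"
    using of_int_round_ge[of x] le_of_int_ceiling[of r] assms by (simp add: round_def) linarith
  ultimately show ?thesis
    by linarith
qed

lemma norm_diff_round_grid_le:
  fixes a :: "'a::euclidean_space" and \<delta> :: real
  assumes \<delta>: "\<delta> > 0"
  shows "norm (a - (\<Sum>b\<in>Basis. (\<delta> * of_int (round (a \<bullet> b / \<delta>))) *\<^sub>R b)) \<le> DIM('a) * \<delta>"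
    (is "norm (a - ?g) \<le> _")
proof -
  have "\<bar>(a - ?g) \<bullet> b\<bar> \<le> \<delta>" if b: "b \<in> Basis" for b
  proof -
    have "(a - ?g) \<bullet> b = \<delta> * (a \<bullet> b / \<delta> - of_int (round (a \<bullet> b / \<delta>)))"
      using b \<delta> by (simp add: inner_diff_left inner_sum_left_Basis field_simps)
    moreover have "\<bar>a \<bullet> b / \<delta> - of_int (round (a \<bullet> b / \<delta>))\<bar> \<le> 1"
      using of_int_round_abs_le[of "a \<bullet> b / \<delta>"] by (simp add: abs_minus_commute)
    ultimately show ?thesis
      using \<delta> by (simp add: abs_mult)
  qed
  then have "(\<Sum>b\<in>Basis. \<bar>(a - ?g) \<bullet> b\<bar>) \<le> DIM('a) * \<delta>"
    using sum_bounded_above[of Basis "\<lambda>b. \<bar>(a - ?g) \<bullet> b\<bar>" \<delta>] by simp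
  then show ?thesis
    using norm_le_l1[of "a - ?g"] by linarith
qed

lemma euclidean_grid_net:
  fixes r \<delta> :: real
  assumes \<delta>: "\<delta> > 0"
  obtains G :: "'a::euclidean_space set"
  where "finite G" "card G \<le> (2 * nat \<lceil>r / \<delta>\<rceil> + 1) ^ DIM('a)"
    and "\<And>a. norm a \<le> r \<Longrightarrow> \<exists>g\<in>G. norm (a - g) \<le> DIM('a) * \<delta>"
proof
  define K where "K = \<lceil>r / \<delta>\<rceil>"
  define grid :: "('a \<Rightarrow> int) \<Rightarrow> 'a" where "grid k = (\<Sum>b\<in>Basis. (\<delta> * of_int (k b)) *\<^sub>R b)" for k
  define P :: "('a \<Rightarrow> int) set" where "P = Basis \<rightarrow>\<^sub>E {-K..K}"
  have "finite P"
    unfolding P_def by (intro finite_PiE) auto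
  then show "finite (grid ` P)"
    by simp
  have "card (grid ` P) \<le> card P"
    using \<open>finite P\<close> by (rule card_image_le)
  also have "\<dots> = nat (2 * K + 1) ^ DIM('a)"
    by (simp add: P_def card_PiE)
  also have "\<dots> \<le> (2 * nat K + 1) ^ DIM('a)"
    by (intro power_mono) auto
  finally show "card (grid ` P) \<le> (2 * nat \<lceil>r / \<delta>\<rceil> + 1) ^ DIM('a)"
    unfolding K_def .
  fix a :: 'a
  assume a: "norm a \<le> r"
  define k where "k = restrict (\<lambda>b. round (a \<bullet> b / \<delta>)) Basis"
  have "\<bar>round (a \<bullet> b / \<delta>)\<bar> \<le> K" if "b \<in> Basis" for b
  proof (unfold K_def, rule abs_round_le_ceiling)
    show "\<bar>a \<bullet> b / \<delta>\<bar> \<le> r / \<delta>"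
      using Basis_le_norm[OF that, of a] a \<delta> by (simp add: divide_right_mono)
  qed
  then have "k \<in> P"
    unfolding k_def P_def by (force simp: abs_le_iff)
  moreover have "grid k = (\<Sum>b\<in>Basis. (\<delta> * of_int (round (a \<bullet> b / \<delta>))) *\<^sub>R b)"
    unfolding grid_def k_def by (intro sum.cong) auto
  ultimately show "\<exists>g\<in>grid ` P. norm (a - g) \<le> DIM('a) * \<delta>"
    using norm_diff_round_grid_le[OF \<delta>, of a] by (metis image_eqI)
qed

lemma finite_net_within:
  fixes S :: "'a::euclidean_space set" and r \<delta> :: real
  assumes S: "S \<subseteq> cball 0 r" and \<delta>: "\<delta> > 0"
  obtains N where "N \<subseteq> S" "finite N" "card N \<le> (2 * nat \<lceil>r / \<delta>\<rceil> + 1) ^ DIM('a)"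
    and "\<And>a. a \<in> S \<Longrightarrow> \<exists>g\<in>N. norm (a - g) \<le> 2 * real DIM('a) * \<delta>"
proof -
  obtain G :: "'a set" where G: "finite G" "card G \<le> (2 * nat \<lceil>r / \<delta>\<rceil> + 1) ^ DIM('a)"
    and cover: "\<And>a. norm a \<le> r \<Longrightarrow> \<exists>g\<in>G. norm (a - g) \<le> DIM('a) * \<delta>"
    using euclidean_grid_net[OF \<delta>] by blast
  define near where "near g = (\<exists>s\<in>S. norm (s - g) \<le> DIM('a) * \<delta>)" for g
  define pick where "pick g = (SOME s. s \<in> S \<and> norm (s - g) \<le> DIM('a) * \<delta>)" for g
  have pick: "pick g \<in> S" "norm (pick g - g) \<le> DIM('a) * \<delta>" if "near g" for g
    using someI_ex[of "\<lambda>s. s \<in> S \<and> norm (s - g) \<le> DIM('a) * \<delta>"] that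
    unfolding near_def pick_def by auto
  show ?thesis
  proof
    show "pick ` {g \<in> G. near g} \<subseteq> S" and "finite (pick ` {g \<in> G. near g})"
      using pick G(1) by auto
    show "card (pick ` {g \<in> G. near g}) \<le> (2 * nat \<lceil>r / \<delta>\<rceil> + 1) ^ DIM('a)"
      using card_image_le[of "{g \<in> G. near g}" pick] card_mono[OF G(1), of "{g \<in> G. near g}"] G(2)
      by (simp add: G(1))
    fix a assume "a \<in> S"
    then obtain g where g: "g \<in> G" "norm (a - g) \<le> DIM('a) * \<delta>"
      using cover S by fastforce
    then have "near g"
      using \<open>a \<in> S\<close> unfolding near_def by blast
    have "norm (a - pick g) \<le> norm (a - g) + norm (pick g - g)"
      using norm_triangle_ineq4[of "a - g" "pick g - g"] by simp
    also have "\<dots> \<le> 2 * real DIM('a) * \<delta>"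
      using g(2) pick(2)[OF \<open>near g\<close>] by simp
    finally show "\<exists>g\<in>pick ` {g \<in> G. near g}. norm (a - g) \<le> 2 * real DIM('a) * \<delta>"
      using g(1) \<open>near g\<close> by blast
  qed
qed

lemma grid_size_le_linear:
  fixes r c \<alpha> :: real
  assumes r: "r \<ge> 0" and c: "c > 0" and \<alpha>: "\<alpha> \<le> 1" and n: "n \<ge> 1"
  shows "real (2 * nat \<lceil>r / (c * real n powr - \<alpha>)\<rceil> + 1) \<le> (2 * r / c + 3) * real n"
proof -
  have "r / (c * real n powr - \<alpha>) = r / c * real n powr \<alpha>"
    using n c by (simp add: powr_minus field_simps)
  also have "\<dots> \<le> r / c * real n"
    using n \<alpha> r c powr_mono[of \<alpha> 1 "real n"] by (intro mult_left_mono) auto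
  finally have "r / (c * real n powr - \<alpha>) \<le> r / c * real n" .
  moreover have "real (nat \<lceil>r / (c * real n powr - \<alpha>)\<rceil>) \<le> r / (c * real n powr - \<alpha>) + 1"
    using r c n of_int_ceiling_le_add_one[of "r / (c * real n powr - \<alpha>)"] by simp
  ultimately have "real (2 * nat \<lceil>r / (c * real n powr - \<alpha>)\<rceil> + 1) \<le> 2 * (r / c) * real n + 3"
    by simp
  also have "\<dots> \<le> (2 * r / c + 3) * real n"
    using n by (simp add: algebra_simps)
  finally show ?thesis .
qed

lemma bounded_polynomial_nets:
  fixes S :: "'a::euclidean_space set" and c \<alpha> :: real
  assumes "bounded S" and c: "c > 0" and \<alpha>: "\<alpha> \<le> 1"
  obtains N C where "\<And>n. N n \<subseteq> S" "\<And>n. finite (N n)"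
    and "\<And>n. n \<ge> 1 \<Longrightarrow> real (card (N n)) \<le> C * real n ^ DIM('a)"
    and "\<And>n a. n \<ge> 1 \<Longrightarrow> a \<in> S \<Longrightarrow> \<exists>g\<in>N n. norm (a - g) \<le> c * real n powr - \<alpha>"
proof -
  obtain r where r: "r \<ge> 0" "S \<subseteq> cball 0 r"
    using \<open>bounded S\<close> unfolding bounded_pos by (meson less_imp_le mem_cball_0 subsetI)
  define c' where "c' = c / (2 * real DIM('a))"
  have c': "c' > 0"
    using c by (simp add: c'_def)
  have "\<exists>N. N \<subseteq> S \<and> finite N \<and> (n \<ge> 1 \<longrightarrow>
      card N \<le> (2 * nat \<lceil>r / (c' * real n powr - \<alpha>)\<rceil> + 1) ^ DIM('a)
      \<and> (\<forall>a\<in>S. \<exists>g\<in>N. norm (a - g) \<le> c * real n powr - \<alpha>))" for n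
  proof -
    have "c' * real n powr - \<alpha> > 0" if "n \<ge> 1"
      using c' that by simp
    moreover have "2 * real DIM('a) * (c' * real n powr - \<alpha>) = c * real n powr - \<alpha>"
      by (simp add: c'_def)
    ultimately show ?thesis
      using finite_net_within[OF r(2)] by (cases "n \<ge> 1") (metis, auto)
  qed
  then obtain N where N: "\<And>n. N n \<subseteq> S" "\<And>n. finite (N n)"
    and card: "\<And>n. n \<ge> 1 \<Longrightarrow> card (N n) \<le> (2 * nat \<lceil>r / (c' * real n powr - \<alpha>)\<rceil> + 1) ^ DIM('a)"
    and cover: "\<And>n a. n \<ge> 1 \<Longrightarrow> a \<in> S \<Longrightarrow> \<exists>g\<in>N n. norm (a - g) \<le> c * real n powr - \<alpha>"
    by metis
  show ?thesis
  proof (rule that[of N "(2 * r / c' + 3) ^ DIM('a)"])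
    fix n :: nat
    assume n: "n \<ge> 1"
    have "real (card (N n)) \<le> real (2 * nat \<lceil>r / (c' * real n powr - \<alpha>)\<rceil> + 1) ^ DIM('a)"
      using card[OF n] by (metis of_nat_le_iff of_nat_power)
    also have "\<dots> \<le> ((2 * r / c' + 3) * real n) ^ DIM('a)"
      using power_mono[OF grid_size_le_linear[OF r(1) c' \<alpha> n] of_nat_0_le_iff] .
    finally show "real (card (N n)) \<le> (2 * r / c' + 3) ^ DIM('a) * real n ^ DIM('a)"
      by (simp add: power_mult_distrib)
  qed (use N cover in auto)
qed

section \<open>Caratheodory integrands\<close>

lemma weighted_mean_close:
  fixes w v :: "'c \<Rightarrow> real"
  assumes "finite C" and w: "\<And>c. c \<in> C \<Longrightarrow> w c \<ge> 0" and pos: "(\<Sum>c\<in>C. w c) > 0"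
    and close: "\<And>c. c \<in> C \<Longrightarrow> w c \<noteq> 0 \<Longrightarrow> \<bar>v c - x\<bar> \<le> r"
  shows "\<bar>(\<Sum>c\<in>C. w c * v c) / (\<Sum>c\<in>C. w c) - x\<bar> \<le> r"
proof -
  have "\<bar>\<Sum>c\<in>C. w c * (v c - x)\<bar> \<le> (\<Sum>c\<in>C. w c * r)"
  proof (rule order.trans[OF sum_abs sum_mono])
    show "\<bar>w c * (v c - x)\<bar> \<le> w c * r" if "c \<in> C" for c
      using w[OF that] close[OF that] by (cases "w c = 0") (auto simp: abs_mult intro: mult_left_mono)
  qed
  also have "\<dots> = (\<Sum>c\<in>C. w c) * r"
    by (simp add: sum_distrib_right)
  finally have "\<bar>\<Sum>c\<in>C. w c * (v c - x)\<bar> \<le> (\<Sum>c\<in>C. w c) * r" .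
  moreover have "(\<Sum>c\<in>C. w c * v c) / (\<Sum>c\<in>C. w c) - x = (\<Sum>c\<in>C. w c * (v c - x)) / (\<Sum>c\<in>C. w c)"
    using pos by (simp add: right_diff_distrib sum_subtractf sum_distrib_left field_simps)
  ultimately show ?thesis
    using pos by (simp add: abs_divide divide_le_eq mult.commute)
qed

lemma ball_average_tendsto:
  fixes g :: "'z::metric_space \<Rightarrow> real"
  assumes fin: "\<And>m. finite (C m)" and sub: "\<And>m. C m \<subseteq> K"
    and cover: "\<And>m. K \<subseteq> (\<Union>c\<in>C m. ball c (1 / Suc m))"
    and g: "continuous_on K g" and z: "z \<in> K"
  defines "w m c \<equiv> indicator (ball c (1 / Suc m)) z :: real"
  shows "(\<lambda>m. (\<Sum>c\<in>C m. w m c * g c) / (\<Sum>c\<in>C m. w m c)) \<longlonglongrightarrow> g z"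
proof (rule tendstoI)
  fix e :: real
  assume "e > 0"
  then obtain d where d: "d > 0" "\<And>c. c \<in> K \<Longrightarrow> dist c z < d \<Longrightarrow> \<bar>g c - g z\<bar> < e / 2"
    using g z unfolding continuous_on_iff dist_real_def by (metis half_gt_zero)
  have "\<forall>\<^sub>F m in sequentially. 1 / Suc m < d"
    using order_tendstoD(2)[OF LIMSEQ_Suc[OF lim_inverse_n] d(1)] by (simp add: divide_inverse)
  then show "\<forall>\<^sub>F m in sequentially. dist ((\<Sum>c\<in>C m. w m c * g c) / (\<Sum>c\<in>C m. w m c)) (g z) < e"
  proof (rule eventually_mono)
    fix m assume m: "1 / Suc m < d"
    have "(\<Sum>c\<in>C m. w m c) \<ge> 1"
    proof -
      obtain c where "c \<in> C m" "z \<in> ball c (1 / Suc m)"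
        using cover z by blast
      then show ?thesis
        using fin member_le_sum[of c "C m" "w m"] by (auto simp: w_def)
    qed
    moreover have "\<bar>g c - g z\<bar> \<le> e / 2" if "c \<in> C m" "w m c \<noteq> 0" for c
    proof -
      have "c \<in> K" "dist c z < d"
        using that sub[of m] m by (auto simp: w_def dist_commute indicator_def)
      then show ?thesis
        using d(2) by fastforce
    qed
    ultimately have "\<bar>(\<Sum>c\<in>C m. w m c * g c) / (\<Sum>c\<in>C m. w m c) - g z\<bar> \<le> e / 2"
      by (intro weighted_mean_close fin) (auto simp: w_def)
    then show "dist ((\<Sum>c\<in>C m. w m c * g c) / (\<Sum>c\<in>C m. w m c)) (g z) < e"
      using \<open>e > 0\<close> by (simp add: dist_real_def)
  qed
qed

text \<open>A Caratheodory function is the pointwise limit of the averages of the measurable functions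
  \<open>F c\<close> over the points \<open>c\<close> of ever finer finite nets of \<open>K\<close> that lie close to \<open>z\<close>.\<close>
lemma borel_measurable_caratheodory:
  fixes F :: "'z::metric_space \<Rightarrow> 'y::topological_space \<Rightarrow> real"
  assumes K: "compact K" and YY: "closed YY"
    and cont: "\<And>y. y \<in> YY \<Longrightarrow> continuous_on K (\<lambda>z. F z y)"
    and meas: "\<And>z. z \<in> K \<Longrightarrow> F z \<in> borel_measurable borel"
  shows "(\<lambda>p. if p \<in> K \<times> YY then F (fst p) (snd p) else 0) \<in> borel_measurable borel"
proof -
  have "\<exists>C. C \<subseteq> K \<and> finite C \<and> K \<subseteq> (\<Union>c\<in>C. ball c (1 / Suc m))" for m :: nat
    using compactE_image[OF K, of K "\<lambda>c. ball c (1 / Suc m)"] by force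
  then obtain C where C: "\<And>m. finite (C m)" "\<And>m. C m \<subseteq> K"
    and cover: "\<And>m. K \<subseteq> (\<Union>c\<in>C m. ball c (1 / Suc m))"
    by metis
  define w :: "nat \<Rightarrow> 'z \<Rightarrow> 'z \<Rightarrow> real" where "w m c = indicator (ball c (1 / Suc m))" for m c
  define u where "u m p = (if p \<in> K \<times> YY then
      (\<Sum>c\<in>C m. w m c (fst p) * F c (snd p)) / (\<Sum>c\<in>C m. w m c (fst p)) else 0)" for m p
  have fst: "fst \<in> borel_measurable (borel :: ('z \<times> 'y) measure)"
    and snd: "snd \<in> borel_measurable (borel :: ('z \<times> 'y) measure)"
    by (intro borel_measurable_continuous_onI continuous_intros)+
  have "u m \<in> borel_measurable borel" for m
  proof -
    have "K \<times> YY \<in> sets borel"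
      using compact_imp_closed[OF K] YY by (intro borel_closed closed_Times)
    moreover have "(\<lambda>p::'z \<times> 'y. w m c (fst p)) \<in> borel_measurable borel" for c
      unfolding w_def using measurable_sets[OF fst borel_open[OF open_ball, of c "1 / Suc m"]]
      by (intro borel_measurable_indicator') (simp add: vimage_def Int_def)
    moreover have "(\<lambda>p::'z \<times> 'y. F c (snd p)) \<in> borel_measurable borel" if "c \<in> K" for c
      using measurable_compose[OF snd meas[OF that]] .
    ultimately show ?thesis
      unfolding u_def using C(2)
      by (intro measurable_If_set borel_measurable_divide borel_measurable_sum borel_measurable_times) auto
  qed
  moreover have "(\<lambda>m. u m p) \<longlonglongrightarrow> (if p \<in> K \<times> YY then F (fst p) (snd p) else 0)" for p
  proof (cases "p \<in> K \<times> YY")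
    case True
    then obtain z y where "p = (z, y)" "z \<in> K" "y \<in> YY"
      by auto
    with ball_average_tendsto[OF C cover cont] show ?thesis
      by (simp add: u_def w_def)
  qed (simp add: u_def)
  ultimately show ?thesis
    by (rule borel_measurable_LIMSEQ_real[rotated])
qed

lemma borel_measurable_caratheodory_comp:
  fixes g :: "'z::euclidean_space \<Rightarrow> 'y::euclidean_space \<Rightarrow> real"
    and u :: "'x::euclidean_space \<Rightarrow> 'z" and \<psi> :: "'x \<Rightarrow> real"
  assumes XX: "compact XX" and YY: "closed YY"
    and u: "continuous_on XX u" "u ` XX \<subseteq> T" and \<psi>: "continuous_on XX \<psi>"
    and g_cont: "\<And>y. y \<in> YY \<Longrightarrow> continuous_on T (\<lambda>z. g z y)"
    and g_meas: "\<And>z. z \<in> T \<Longrightarrow> g z \<in> borel_measurable borel"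
  shows "(\<lambda>p. if p \<in> XX \<times> YY then g (u (fst p)) (snd p) * \<psi> (fst p) else 0) \<in> borel_measurable borel"
proof -
  have K: "compact (u ` XX)"
    using compact_continuous_image[OF u(1) XX] .
  have \<Phi>: "(\<lambda>q. if q \<in> u ` XX \<times> YY then g (fst q) (snd q) else 0) \<in> borel_measurable borel"
    using u(2) g_cont g_meas by (intro borel_measurable_caratheodory[OF K YY]) (auto intro: continuous_on_subset)
  define ur where "ur x = (if x \<in> XX then u x else 0)" for x
  define \<psi>r where "\<psi>r x = (if x \<in> XX then \<psi> x else 0)" for x
  have closed_XX: "XX \<in> sets borel"
    using XX by (intro borel_closed compact_imp_closed)
  have "ur \<in> borel_measurable borel" "\<psi>r \<in> borel_measurable borel"
    unfolding ur_def \<psi>r_def using closed_XX u(1) \<psi>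
    by (auto intro!: borel_measurable_continuous_on_if continuous_on_const)
  moreover have "fst \<in> borel_measurable (borel :: ('x \<times> 'y) measure)"
    and "snd \<in> borel_measurable (borel :: ('x \<times> 'y) measure)"
    by (intro borel_measurable_continuous_onI continuous_intros)+
  ultimately have pair: "(\<lambda>p::'x \<times> 'y. (ur (fst p), snd p)) \<in> borel_measurable borel"
    and \<psi>r_fst: "(\<lambda>p::'x \<times> 'y. \<psi>r (fst p)) \<in> borel_measurable borel"
    by (auto intro!: borel_measurable_Pair measurable_compose[where f = fst])
  have "(\<lambda>p::'x \<times> 'y. if (ur (fst p), snd p) \<in> u ` XX \<times> YY then g (ur (fst p)) (snd p) else 0)
      \<in> borel_measurable borel"
    using measurable_compose[OF pair \<Phi>] by (simp only: fst_conv snd_conv)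
  from borel_measurable_times[OF this \<psi>r_fst]
  have "(\<lambda>p::'x \<times> 'y. (if (ur (fst p), snd p) \<in> u ` XX \<times> YY then g (ur (fst p)) (snd p) else 0)
      * \<psi>r (fst p)) \<in> borel_measurable borel" .
  also have "(\<lambda>p::'x \<times> 'y. (if (ur (fst p), snd p) \<in> u ` XX \<times> YY then g (ur (fst p)) (snd p) else 0)
      * \<psi>r (fst p)) = (\<lambda>p. if p \<in> XX \<times> YY then g (u (fst p)) (snd p) * \<psi> (fst p) else 0)"
    by (auto simp: fun_eq_iff ur_def \<psi>r_def mem_Times_iff)
  finally show ?thesis .
qed

lemma lipschitz_family_bounded:
  fixes g :: "'z::metric_space \<Rightarrow> 'y \<Rightarrow> 'b::real_normed_vector"
  assumes lip: "\<And>y. y \<in> Y \<Longrightarrow> L-lipschitz_on T (\<lambda>z. g z y)"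
    and "bounded T" and z0: "z0 \<in> T" and "bounded ((\<lambda>y. g z0 y) ` Y)"
  obtains B where "\<And>z y. z \<in> T \<Longrightarrow> y \<in> Y \<Longrightarrow> norm (g z y) \<le> B"
proof -
  obtain D where D: "\<And>z. z \<in> T \<Longrightarrow> dist z0 z \<le> D"
    using \<open>bounded T\<close> unfolding bounded_any_center[of T z0] by blast
  obtain B0 where B0: "\<And>y. y \<in> Y \<Longrightarrow> norm (g z0 y) \<le> B0"
    using \<open>bounded ((\<lambda>y. g z0 y) ` Y)\<close> unfolding bounded_iff by blast
  have "norm (g z y) \<le> B0 + L * D" if z: "z \<in> T" and y: "y \<in> Y" for z y
  proof -
    have "norm (g z y) \<le> norm (g z0 y) + dist (g z y) (g z0 y)"
      by (metis dist_norm norm_triangle_sub)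
    also have "\<dots> \<le> B0 + L * dist z z0"
      using B0[OF y] lipschitz_onD[OF lip[OF y] z z0] by linarith
    also have "\<dots> \<le> B0 + L * D"
      using D[OF z] lipschitz_on_nonneg[OF lip[OF y]] by (simp add: dist_commute mult_left_mono)
    finally show ?thesis .
  qed
  then show ?thesis
    by (rule that)
qed

lemma caratheodory_integrand:
  fixes g :: "'z::euclidean_space \<Rightarrow> 'y::euclidean_space \<Rightarrow> real"
    and u :: "'a::real_normed_vector \<Rightarrow> 'x::euclidean_space \<Rightarrow> 'z" and \<psi> :: "'x \<Rightarrow> real"
  assumes XX: "compact XX" and YY: "closed YY"
    and u_in: "\<And>a x. a \<in> S \<Longrightarrow> x \<in> XX \<Longrightarrow> u a x \<in> T"
    and u_lip: "\<And>a b x. a \<in> S \<Longrightarrow> b \<in> S \<Longrightarrow> x \<in> XX \<Longrightarrow> dist (u a x) (u b x) \<le> Lu * norm (a - b)"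
    and u_cont: "\<And>a. a \<in> S \<Longrightarrow> continuous_on XX (u a)"
    and \<psi>: "continuous_on XX \<psi>"
    and g_lip: "\<And>y. y \<in> YY \<Longrightarrow> Lg-lipschitz_on T (\<lambda>z. g z y)"
    and g_bound: "\<And>z y. z \<in> T \<Longrightarrow> y \<in> YY \<Longrightarrow> \<bar>g z y\<bar> \<le> Bg"
    and g_meas: "\<And>z. z \<in> T \<Longrightarrow> g z \<in> borel_measurable borel"
  obtains B L where
    "\<And>a. a \<in> S \<Longrightarrow>
      (\<lambda>p. if p \<in> XX \<times> YY then g (u a (fst p)) (snd p) * \<psi> (fst p) else 0) \<in> borel_measurable borel"
    "\<And>a x y. a \<in> S \<Longrightarrow> x \<in> XX \<Longrightarrow> y \<in> YY \<Longrightarrow> \<bar>g (u a x) y * \<psi> x\<bar> \<le> B"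
    "\<And>a b x y. a \<in> S \<Longrightarrow> b \<in> S \<Longrightarrow> x \<in> XX \<Longrightarrow> y \<in> YY \<Longrightarrow>
      \<bar>g (u a x) y * \<psi> x - g (u b x) y * \<psi> x\<bar> \<le> L * norm (a - b)"
proof -
  obtain B\<psi> where B\<psi>: "\<And>x. x \<in> XX \<Longrightarrow> \<bar>\<psi> x\<bar> \<le> B\<psi>"
    using compact_imp_bounded[OF compact_continuous_image[OF \<psi> XX]] unfolding bounded_iff by auto
  show ?thesis
  proof
    show "(\<lambda>p. if p \<in> XX \<times> YY then g (u a (fst p)) (snd p) * \<psi> (fst p) else 0) \<in> borel_measurable borel"
      if "a \<in> S" for a
      using u_in that g_lip g_meas
      by (intro borel_measurable_caratheodory_comp[OF XX YY u_cont[OF that] _ \<psi>, where T = T])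
        (auto intro: lipschitz_on_continuous_on)
    fix a b x y
    assume a: "a \<in> S" and x: "x \<in> XX" and y: "y \<in> YY"
    show "\<bar>g (u a x) y * \<psi> x\<bar> \<le> Bg * B\<psi>"
      unfolding abs_mult using g_bound[OF u_in[OF a x] y] B\<psi>[OF x]
      by (intro mult_mono) auto
    assume b: "b \<in> S"
    have "\<bar>g (u a x) y - g (u b x) y\<bar> \<le> Lg * dist (u a x) (u b x)"
      using lipschitz_onD[OF g_lip[OF y] u_in[OF a x] u_in[OF b x]] by (simp add: dist_real_def)
    also have "\<dots> \<le> Lg * (Lu * norm (a - b))"
      using u_lip[OF a b x] lipschitz_on_nonneg[OF g_lip[OF y]] by (intro mult_left_mono)
    finally have "\<bar>g (u a x) y - g (u b x) y\<bar> * \<bar>\<psi> x\<bar> \<le> Lg * (Lu * norm (a - b)) * B\<psi>"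
      using B\<psi>[OF x] by (intro mult_mono) auto
    moreover have "\<bar>g (u a x) y * \<psi> x - g (u b x) y * \<psi> x\<bar> = \<bar>g (u a x) y - g (u b x) y\<bar> * \<bar>\<psi> x\<bar>"
      by (simp add: abs_mult flip: left_diff_distrib)
    ultimately show "\<bar>g (u a x) y * \<psi> x - g (u b x) y * \<psi> x\<bar> \<le> Lg * Lu * B\<psi> * norm (a - b)"
      by (simp add: ac_simps)
  qed
qed

section \<open>A uniform strong law of large numbers with rate\<close>

lemma summable_power_mult_exp_neg_powr:
  fixes \<kappa> \<beta> :: real
  assumes "\<kappa> > 0" "\<beta> > 0"
  shows "summable (\<lambda>n. real n ^ p * exp (- \<kappa> * real n powr \<beta>))"
proof (rule summable_comparison_test_bigo)
  show "summable (\<lambda>n. norm (1 / real n ^ 2))"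
    using inverse_power_summable[of 2, where 'a = real] by (simp add: divide_inverse)
  show "(\<lambda>n. real n ^ p * exp (- \<kappa> * real n powr \<beta>)) \<in> O(\<lambda>n. 1 / real n ^ 2)"
    using assms by real_asymp
qed

locale iid_sample = prob_space +
  fixes W :: "'a \<Rightarrow> 'z::topological_space" and Ws :: "nat \<Rightarrow> 'a \<Rightarrow> 'z" and Z :: "'z set"
  assumes random_variable_W: "random_variable borel W"
    and W_in: "\<And>\<omega>. \<omega> \<in> space M \<Longrightarrow> W \<omega> \<in> Z"
    and Ws_in: "\<And>k \<omega>. \<omega> \<in> space M \<Longrightarrow> Ws k \<omega> \<in> Z"
    and indep_Ws: "indep_vars (\<lambda>_. borel) Ws {1..}"
    and distr_Ws: "\<And>k. k \<ge> 1 \<Longrightarrow> distr M borel (Ws k) = distr M borel W"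
begin

definition sample_mean :: "('z \<Rightarrow> real) \<Rightarrow> nat \<Rightarrow> 'a \<Rightarrow> real" where
  "sample_mean f n \<omega> = (\<Sum>k=1..n. f (Ws k \<omega>)) / real n"

definition deviation :: "('z \<Rightarrow> real) \<Rightarrow> nat \<Rightarrow> 'a \<Rightarrow> real" where
  "deviation f n \<omega> = sample_mean f n \<omega> - expectation (\<lambda>\<omega>. f (W \<omega>))"

lemma random_variable_Ws: "k \<ge> 1 \<Longrightarrow> random_variable borel (Ws k)"
  using indep_Ws unfolding indep_vars_def by auto

lemma deviation_cong:
  assumes "\<And>z. z \<in> Z \<Longrightarrow> f z = g z" and "\<omega> \<in> space M"
  shows "deviation f n \<omega> = deviation g n \<omega>"
proof -
  have "expectation (\<lambda>\<omega>. f (W \<omega>)) = expectation (\<lambda>\<omega>. g (W \<omega>))"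
    using assms(1) W_in by (intro Bochner_Integration.integral_cong) auto
  then show ?thesis
    using assms Ws_in by (simp add: deviation_def sample_mean_def)
qed

lemma borel_measurable_deviation:
  assumes "(\<lambda>z. if z \<in> Z then f z else 0) \<in> borel_measurable borel"
  shows "deviation f n \<in> borel_measurable M"
proof -
  have "deviation (\<lambda>z. if z \<in> Z then f z else 0) n \<in> borel_measurable M"
    unfolding deviation_def sample_mean_def[abs_def]
    by (intro borel_measurable_diff borel_measurable_const borel_measurable_divide borel_measurable_sum
        measurable_compose[OF random_variable_Ws assms]) auto
  moreover have "deviation f n \<omega> = deviation (\<lambda>z. if z \<in> Z then f z else 0) n \<omega>" if "\<omega> \<in> space M" for \<omega>
    using that by (intro deviation_cong) simp
  ultimately show ?thesis
    using measurable_cong[where f = "deviation f n" and g = "deviation (\<lambda>z. if z \<in> Z then f z else 0) n"]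
    by blast
qed

lemma sets_abs_deviation_ge:
  assumes "(\<lambda>z. if z \<in> Z then f z else 0) \<in> borel_measurable borel"
  shows "{\<omega> \<in> space M. t \<le> \<bar>deviation f n \<omega>\<bar>} \<in> events"
proof -
  note borel_measurable_deviation[OF assms, measurable]
  show ?thesis
    by measurable
qed

lemma integrable_bounded_on_Z:
  fixes f :: "'z \<Rightarrow> real"
  assumes "(\<lambda>z. if z \<in> Z then f z else 0) \<in> borel_measurable borel" and "\<And>z. z \<in> Z \<Longrightarrow> \<bar>f z\<bar> \<le> B"
  shows "integrable M (\<lambda>\<omega>. f (W \<omega>))"
proof -
  have "norm (if W \<omega> \<in> Z then f (W \<omega>) else 0) \<le> \<bar>B\<bar>" if "\<omega> \<in> space M" for \<omega>
    using assms(2)[OF W_in[OF that]] W_in[OF that] by simp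
  then have "integrable M (\<lambda>\<omega>. if W \<omega> \<in> Z then f (W \<omega>) else 0)"
    using measurable_compose[OF random_variable_W assms(1)]
    by (intro integrable_const_bound[where B = "\<bar>B\<bar>"] AE_I2) auto
  moreover have "integrable M (\<lambda>\<omega>. if W \<omega> \<in> Z then f (W \<omega>) else 0) \<longleftrightarrow> integrable M (\<lambda>\<omega>. f (W \<omega>))"
    by (rule Bochner_Integration.integrable_cong) (simp_all add: W_in)
  ultimately show ?thesis
    by simp
qed

lemma abs_deviation_diff_le:
  fixes f g :: "'z \<Rightarrow> real"
  assumes "integrable M (\<lambda>\<omega>. f (W \<omega>))" "integrable M (\<lambda>\<omega>. g (W \<omega>))"
    and close: "\<And>z. z \<in> Z \<Longrightarrow> \<bar>f z - g z\<bar> \<le> d" and "\<omega> \<in> space M" and "n \<ge> 1"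
  shows "\<bar>deviation f n \<omega> - deviation g n \<omega>\<bar> \<le> 2 * d"
proof -
  have "\<bar>sample_mean f n \<omega> - sample_mean g n \<omega>\<bar> = \<bar>\<Sum>k=1..n. f (Ws k \<omega>) - g (Ws k \<omega>)\<bar> / real n"
    by (simp add: sample_mean_def sum_subtractf diff_divide_distrib[symmetric] abs_divide)
  also have "\<dots> \<le> (\<Sum>k=1..n. d) / real n"
    using assms Ws_in by (intro divide_right_mono order.trans[OF sum_abs sum_mono]) auto
  also have "\<dots> = d"
    using \<open>n \<ge> 1\<close> by simp
  finally have mean: "\<bar>sample_mean f n \<omega> - sample_mean g n \<omega>\<bar> \<le> d" .
  have "\<bar>expectation (\<lambda>\<omega>. f (W \<omega>)) - expectation (\<lambda>\<omega>. g (W \<omega>))\<bar>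
      = norm (expectation (\<lambda>\<omega>. f (W \<omega>) - g (W \<omega>)))"
    using assms by simp
  also have "\<dots> \<le> expectation (\<lambda>\<omega>. norm (f (W \<omega>) - g (W \<omega>)))"
    by (rule integral_norm_bound)
  also have "\<dots> \<le> expectation (\<lambda>\<omega>. d)"
    using assms W_in by (intro integral_mono) auto
  also have "\<dots> = d"
    by (simp add: prob_space)
  finally show ?thesis
    using mean unfolding deviation_def abs_le_iff by linarith
qed

text \<open>Hoeffding's inequality only sees the values of \<open>f\<close> on \<open>Z\<close>, so it is applied to the
  globally measurable function that vanishes outside \<open>Z\<close>.\<close>

lemma prob_abs_deviation_ge:
  fixes f :: "'z \<Rightarrow> real" and B t :: real
  assumes meas: "(\<lambda>z. if z \<in> Z then f z else 0) \<in> borel_measurable borel"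
    and bound: "\<And>z. z \<in> Z \<Longrightarrow> \<bar>f z\<bar> \<le> B" and B: "B > 0" and n: "n \<ge> 1" and t: "t \<ge> 0"
  shows "prob {\<omega> \<in> space M. t \<le> \<bar>deviation f n \<omega>\<bar>} \<le> 2 * exp (- (real n * t\<^sup>2) / (2 * B\<^sup>2))"
proof -
  define fZ where "fZ z = (if z \<in> Z then f z else 0)" for z
  have fZ: "fZ \<in> borel_measurable borel"
    using meas by (simp add: fZ_def[abs_def])
  interpret Hoeffding_ineq_iid M "{1..n}" "\<lambda>k \<omega>. fZ (Ws k \<omega>)" "\<lambda>\<omega>. fZ (W \<omega>)" "-B" B
      "expectation (\<lambda>\<omega>. fZ (W \<omega>))"
  proof unfold_locales
    have "indep_vars (\<lambda>_. borel) (\<lambda>k \<omega>. fZ (Ws k \<omega>)) {1..}"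
      using indep_vars_compose2[OF indep_Ws, of "\<lambda>_. fZ" "\<lambda>_. borel"] fZ by simp
    then show "indep_vars (\<lambda>_. borel) (\<lambda>k \<omega>. fZ (Ws k \<omega>)) {1..n}"
      by (rule indep_vars_subset) auto
    show "distr M borel (\<lambda>\<omega>. fZ (Ws k \<omega>)) = distr M borel (\<lambda>\<omega>. fZ (W \<omega>))" if "k \<in> {1..n}" for k
    proof -
      have "distr M borel (\<lambda>\<omega>. fZ (Ws k \<omega>)) = distr (distr M borel (Ws k)) borel fZ"
        using distr_distr[OF fZ random_variable_Ws] that by (simp add: comp_def)
      also have "\<dots> = distr M borel (\<lambda>\<omega>. fZ (W \<omega>))"
        using distr_Ws[of k] that distr_distr[OF fZ random_variable_W] by (simp add: comp_def)
      finally show ?thesis .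
    qed
    show "random_variable borel (\<lambda>\<omega>. fZ (W \<omega>))"
      using measurable_compose[OF random_variable_W fZ] .
    show "AE \<omega> in M. fZ (W \<omega>) \<in> {-B..B}"
      using bound W_in B by (intro AE_I2) (force simp: fZ_def abs_le_iff)
  qed simp
  have "prob {\<omega> \<in> space M. t \<le> \<bar>(\<Sum>k\<in>{1..n}. fZ (Ws k \<omega>)) / real (card {1..n}) - expectation (\<lambda>\<omega>. fZ (W \<omega>))\<bar>}
      \<le> 2 * exp (- 2 * real (card {1..n}) * t\<^sup>2 / (B - - B)\<^sup>2)"
    using Hoeffding_ineq_abs_ge' t B n by auto
  moreover have "deviation f n \<omega> = deviation fZ n \<omega>" if "\<omega> \<in> space M" for \<omega>
    using that by (intro deviation_cong) (simp add: fZ_def)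
  then have "{\<omega> \<in> space M. t \<le> \<bar>deviation f n \<omega>\<bar>} = {\<omega> \<in> space M.
      t \<le> \<bar>(\<Sum>k\<in>{1..n}. fZ (Ws k \<omega>)) / real (card {1..n}) - expectation (\<lambda>\<omega>. fZ (W \<omega>))\<bar>}"
    by (auto simp: deviation_def sample_mean_def)
  ultimately show ?thesis
    using B by (simp add: power2_eq_square field_simps)
qed

lemma prob_net_deviation_le:
  fixes f :: "'b \<Rightarrow> 'z \<Rightarrow> real"
  assumes "finite G"
    and meas: "\<And>g. g \<in> G \<Longrightarrow> (\<lambda>z. if z \<in> Z then f g z else 0) \<in> borel_measurable borel"
    and bound: "\<And>g z. g \<in> G \<Longrightarrow> z \<in> Z \<Longrightarrow> \<bar>f g z\<bar> \<le> B" and "B > 0" "n \<ge> 1" "t \<ge> 0"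
  shows "prob (\<Union>g\<in>G. {\<omega> \<in> space M. t \<le> \<bar>deviation (f g) n \<omega>\<bar>})
    \<le> real (card G) * (2 * exp (- (real n * t\<^sup>2) / (2 * B\<^sup>2)))"
proof -
  have "prob (\<Union>g\<in>G. {\<omega> \<in> space M. t \<le> \<bar>deviation (f g) n \<omega>\<bar>})
      \<le> (\<Sum>g\<in>G. prob {\<omega> \<in> space M. t \<le> \<bar>deviation (f g) n \<omega>\<bar>})"
    using \<open>finite G\<close> meas by (intro measure_UNION_le sets_abs_deviation_ge) auto
  also have "\<dots> \<le> (\<Sum>g\<in>G. 2 * exp (- (real n * t\<^sup>2) / (2 * B\<^sup>2)))"
    using assms by (intro sum_mono prob_abs_deviation_ge) auto
  finally show ?thesis
    by simp
qed

lemma AE_eventually_net_deviation_less: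
  fixes f :: "'b \<Rightarrow> 'z \<Rightarrow> real" and N :: "nat \<Rightarrow> 'b set"
  assumes fin: "\<And>n. finite (N n)" and card: "\<And>n. n \<ge> 1 \<Longrightarrow> real (card (N n)) \<le> C * real n ^ p"
    and meas: "\<And>n g. g \<in> N n \<Longrightarrow> (\<lambda>z. if z \<in> Z then f g z else 0) \<in> borel_measurable borel"
    and bound: "\<And>n g z. g \<in> N n \<Longrightarrow> z \<in> Z \<Longrightarrow> \<bar>f g z\<bar> \<le> B" and B: "B > 0"
    and \<epsilon>: "\<epsilon> > 0" and \<alpha>: "0 < \<alpha>" "\<alpha> < 1/2"
  shows "AE \<omega> in M. \<forall>\<^sub>F n in sequentially. \<forall>g\<in>N n. \<bar>deviation (f g) n \<omega>\<bar> < \<epsilon> * real n powr - \<alpha>"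
proof -
  define bad where "bad n = (\<Union>g\<in>N n. {\<omega> \<in> space M. \<epsilon> * real n powr - \<alpha> \<le> \<bar>deviation (f g) n \<omega>\<bar>})" for n
  define \<kappa> where "\<kappa> = \<epsilon>\<^sup>2 / (2 * B\<^sup>2)"
  define \<beta> where "\<beta> = 1 - 2 * \<alpha>"
  have prob_bad: "prob (bad n) \<le> 2 * C * (real n ^ p * exp (- \<kappa> * real n powr \<beta>))" if n: "n \<ge> 1" for n
  proof -
    have "real n * (real n powr - \<alpha>)\<^sup>2 = real n powr 1 * real n powr (- \<alpha> + - \<alpha>)"
      by (simp add: power2_eq_square flip: powr_add)
    also have "\<dots> = real n powr \<beta>"
      unfolding \<beta>_def powr_add[symmetric] by simp
    finally have "- (real n * (\<epsilon> * real n powr - \<alpha>)\<^sup>2) / (2 * B\<^sup>2) = - \<kappa> * real n powr \<beta>"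
      by (simp add: \<kappa>_def power_mult_distrib)
    moreover have "prob (bad n) \<le> real (card (N n)) * (2 * exp (- (real n * (\<epsilon> * real n powr - \<alpha>)\<^sup>2) / (2 * B\<^sup>2)))"
      unfolding bad_def using fin meas bound B n \<epsilon> by (intro prob_net_deviation_le) auto
    ultimately have "prob (bad n) \<le> real (card (N n)) * (2 * exp (- \<kappa> * real n powr \<beta>))"
      by simp
    also have "\<dots> \<le> C * real n ^ p * (2 * exp (- \<kappa> * real n powr \<beta>))"
      by (rule mult_right_mono[OF card[OF n]]) simp
    finally show ?thesis
      by (simp add: ac_simps)
  qed
  have "summable (\<lambda>n. 2 * C * (real n ^ p * exp (- \<kappa> * real n powr \<beta>)))"
    using \<epsilon> B \<alpha> by (intro summable_mult summable_power_mult_exp_neg_powr) (auto simp: \<kappa>_def \<beta>_def)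
  then have "summable (\<lambda>n. prob (bad n))"
    by (rule summable_comparison_test'[where N = 1]) (use prob_bad in simp)
  moreover have "bad n \<in> events" for n
    unfolding bad_def by (intro sets.finite_UN sets_abs_deviation_ge fin) (rule meas)
  ultimately have "AE \<omega> in M. \<forall>\<^sub>F n in sequentially. \<omega> \<in> space M - bad n"
    by (intro borel_cantelli_AE1) (simp_all add: less_top[symmetric])
  then show ?thesis
  proof (rule eventually_mono)
    fix \<omega> assume "\<forall>\<^sub>F n in sequentially. \<omega> \<in> space M - bad n"
    then show "\<forall>\<^sub>F n in sequentially. \<forall>g\<in>N n. \<bar>deviation (f g) n \<omega>\<bar> < \<epsilon> * real n powr - \<alpha>"
      by (rule eventually_mono) (auto simp: bad_def not_le)
  qed
qed

lemma AE_eventually_uniform_deviation_less: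
  fixes f :: "'b::euclidean_space \<Rightarrow> 'z \<Rightarrow> real" and S :: "'b set"
  assumes "bounded S"
    and meas: "\<And>a. a \<in> S \<Longrightarrow> (\<lambda>z. if z \<in> Z then f a z else 0) \<in> borel_measurable borel"
    and bound: "\<And>a z. a \<in> S \<Longrightarrow> z \<in> Z \<Longrightarrow> \<bar>f a z\<bar> \<le> B"
    and lip: "\<And>a b z. a \<in> S \<Longrightarrow> b \<in> S \<Longrightarrow> z \<in> Z \<Longrightarrow> \<bar>f a z - f b z\<bar> \<le> L * norm (a - b)"
    and \<epsilon>: "\<epsilon> > 0" and \<alpha>: "0 < \<alpha>" "\<alpha> < 1/2"
  shows "AE \<omega> in M. \<forall>\<^sub>F n in sequentially. \<forall>a\<in>S. \<bar>deviation (f a) n \<omega>\<bar> < \<epsilon> * real n powr - \<alpha>"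
proof -
  define L' where "L' = \<bar>L\<bar> + 1"
  have L': "L' > 0" "\<epsilon> / (4 * L') > 0" "\<alpha> \<le> 1"
    using \<epsilon> \<alpha> by (auto simp: L'_def)
  have lip': "\<bar>f a z - f b z\<bar> \<le> L' * norm (a - b)" if "a \<in> S" "b \<in> S" "z \<in> Z" for a b z
  proof -
    have "L * norm (a - b) \<le> L' * norm (a - b)"
      by (intro mult_right_mono) (auto simp: L'_def)
    then show ?thesis
      using lip[OF that] by linarith
  qed
  obtain N C where N: "\<And>n. N n \<subseteq> S" "\<And>n. finite (N n)"
    and card: "\<And>n. n \<ge> 1 \<Longrightarrow> real (card (N n)) \<le> C * real n ^ DIM('b)"
    and cover: "\<And>n a. n \<ge> 1 \<Longrightarrow> a \<in> S \<Longrightarrow> \<exists>g\<in>N n. norm (a - g) \<le> \<epsilon> / (4 * L') * real n powr - \<alpha>"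
    by (rule bounded_polynomial_nets[OF \<open>bounded S\<close> L'(2,3)]) blast
  have "AE \<omega> in M. \<forall>\<^sub>F n in sequentially. \<forall>g\<in>N n. \<bar>deviation (f g) n \<omega>\<bar> < \<epsilon> / 2 * real n powr - \<alpha>"
  proof (rule AE_eventually_net_deviation_less[where B = "\<bar>B\<bar> + 1"])
    show "(\<lambda>z. if z \<in> Z then f g z else 0) \<in> borel_measurable borel" if "g \<in> N n" for n g
      using meas N(1) that by blast
    show "\<bar>f g z\<bar> \<le> \<bar>B\<bar> + 1" if "g \<in> N n" "z \<in> Z" for n g z
      using bound[of g z] N(1) that by fastforce
    show "\<epsilon> / 2 > 0"
      using \<epsilon> by simp
  qed (fact N(2) card \<alpha> | simp)+
  with AE_space show ?thesis
  proof eventually_elim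
    case (elim \<omega>)
    from elim(2) show ?case
    proof (rule eventually_mono[OF eventually_conj[OF _ eventually_ge_at_top[of 1]]], intro ballI)
      fix n a
      assume "(\<forall>g\<in>N n. \<bar>deviation (f g) n \<omega>\<bar> < \<epsilon> / 2 * real n powr - \<alpha>) \<and> n \<ge> 1" and a: "a \<in> S"
      then have net: "\<forall>g\<in>N n. \<bar>deviation (f g) n \<omega>\<bar> < \<epsilon> / 2 * real n powr - \<alpha>" and n: "n \<ge> 1"
        by auto
      obtain g where g: "g \<in> N n" "norm (a - g) \<le> \<epsilon> / (4 * L') * real n powr - \<alpha>"
        using cover[OF n a] by blast
      then have "g \<in> S"
        using N(1) by blast
      then have "\<bar>deviation (f a) n \<omega> - deviation (f g) n \<omega>\<bar> \<le> 2 * (L' * norm (a - g))"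
        using lip' a elim(1) n
        by (intro abs_deviation_diff_le integrable_bounded_on_Z[OF meas bound]) auto
      moreover have "2 * (L' * norm (a - g)) \<le> \<epsilon> / 2 * real n powr - \<alpha>"
        using mult_left_mono[OF g(2), of "2 * L'"] L' by (simp add: field_simps)
      ultimately show "\<bar>deviation (f a) n \<omega>\<bar> < \<epsilon> * real n powr - \<alpha>"
        using net g(1) by fastforce
    qed
  qed
qed

end

lemma (in prob_space) AE_eventually_imp_prob_one_set:
  assumes "AE \<omega> in M. \<forall>\<^sub>F n in sequentially. P n \<omega>"
  shows "\<exists>\<Omega> \<in> events. prob \<Omega> = 1 \<and> (\<forall>\<omega>\<in>\<Omega>. \<exists>n\<^sub>0::nat. n\<^sub>0 \<ge> 1 \<and> (\<forall>n>n\<^sub>0. P n \<omega>))"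
proof -
  obtain N where N: "{\<omega> \<in> space M. \<not> (\<forall>\<^sub>F n in sequentially. P n \<omega>)} \<subseteq> N"
    "emeasure M N = 0" "N \<in> events"
    using assms by (rule AE_E)
  show ?thesis
  proof (intro bexI conjI ballI)
    show "space M - N \<in> events" and "prob (space M - N) = 1"
      using N(2,3) prob_compl[of N] by (auto simp: measure_def)
    fix \<omega> assume "\<omega> \<in> space M - N"
    then obtain n\<^sub>0 where "\<forall>n\<ge>n\<^sub>0. P n \<omega>"
      using N(1) unfolding eventually_sequentially by blast
    then show "\<exists>n\<^sub>0::nat. n\<^sub>0 \<ge> 1 \<and> (\<forall>n>n\<^sub>0. P n \<omega>)"
      by (intro exI[of _ "n\<^sub>0 + 1"]) auto
  qed
qed

section \<open>The sampled game\<close>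

lemma integral_vec_vec_nth:
  fixes f :: "'a \<Rightarrow> real^'d^'n"
  assumes "\<And>i l. integrable M (\<lambda>x. f x $ i $ l)"
  shows "integral\<^sup>L M f $ i $ l = (\<integral>x. f x $ i $ l \<partial>M)"
proof -
  have component: "(\<Sum>i\<in>UNIV. \<Sum>l\<in>UNIV. c i l *\<^sub>R axis i (axis l 1)) $ j $ m = c j m"
    for c :: "'n \<Rightarrow> 'd \<Rightarrow> real" and j m
  proof -
    have "c i l *\<^sub>R axis i (axis l 1) $ j $ m = (if i = j then if l = m then c i l else 0 else 0)" for i l
      by (cases "i = j"; cases "l = m") (auto simp: axis_def)
    moreover have "(\<Sum>l\<in>UNIV. if i = j then if l = m then c i l else 0 else 0) = (if i = j then c i m else 0)"
      for i
      by (cases "i = j") simp_all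
    ultimately show ?thesis
      by simp
  qed
  define g :: "'a \<Rightarrow> real^'d^'n"
    where "g x = (\<Sum>i\<in>UNIV. \<Sum>l\<in>UNIV. (f x $ i $ l) *\<^sub>R axis i (axis l 1))" for x
  have "integrable M g"
    unfolding g_def[abs_def] using assms by simp
  moreover have "f = g"
    unfolding g_def by (intro ext iffD2[OF vec_eq_iff] allI) (simp only: component)
  ultimately have "integrable M f"
    by simp
  moreover have "bounded_linear (\<lambda>v::real^'d^'n. v $ i $ l)"
    using bounded_linear_compose[OF bounded_linear_vec_nth bounded_linear_vec_nth] .
  ultimately show ?thesis
    by (simp add: integral_bounded_linear[symmetric, where T = "\<lambda>v. v $ i $ l", unfolded o_def])
qed

lemma norm_vec_vec_less:
  fixes v :: "real^'d^'n"
  assumes "\<And>i l. \<bar>v $ i $ l\<bar> < \<delta>"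
  shows "norm v < real CARD('n) * real CARD('d) * \<delta>"
proof -
  have "norm v \<le> (\<Sum>i\<in>UNIV. norm (v $ i))"
    unfolding norm_vec_def by (rule L2_set_le_sum) simp
  also have "\<dots> \<le> (\<Sum>i\<in>UNIV. \<Sum>l\<in>UNIV. \<bar>v $ i $ l\<bar>)"
    by (intro sum_mono norm_le_l1_cart)
  also have "\<dots> < (\<Sum>i\<in>(UNIV::'n set). \<Sum>l\<in>(UNIV::'d set). \<delta>)"
    using assms by (intro sum_strict_mono) auto
  finally show ?thesis
    by simp
qed

lemma abs_zi_diff_le:
  fixes \<phi> :: "'d::finite \<Rightarrow> 'x \<Rightarrow> real"
  assumes "\<And>l. \<bar>\<phi> l x\<bar> \<le> B"
  shows "\<bar>zi \<phi> ai x - zi \<phi> bi x\<bar> \<le> real CARD('d) * B * norm (ai - bi)"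
proof -
  have "\<bar>zi \<phi> ai x - zi \<phi> bi x\<bar> = \<bar>\<Sum>l\<in>UNIV. (ai - bi) $ l * \<phi> l x\<bar>"
    unfolding zi_def by (simp add: sum_subtractf left_diff_distrib)
  also have "\<dots> \<le> (\<Sum>l\<in>UNIV. \<bar>(ai - bi) $ l * \<phi> l x\<bar>)"
    by (rule sum_abs)
  also have "\<dots> \<le> (\<Sum>l\<in>(UNIV::'d set). norm (ai - bi) * B)"
  proof (rule sum_mono)
    fix l
    show "\<bar>(ai - bi) $ l * \<phi> l x\<bar> \<le> norm (ai - bi) * B"
      unfolding abs_mult using component_le_norm_cart[of "ai - bi" l] assms[of l]
      by (intro mult_mono) auto
  qed
  finally show ?thesis
    by (simp add: ac_simps)
qed

lemma norm_zhat_diff_le: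
  fixes \<phi> :: "'d::finite \<Rightarrow> 'x \<Rightarrow> real" and a b :: "real^'d^'n"
  assumes "\<And>l. \<bar>\<phi> l x\<bar> \<le> B"
  shows "norm (zhat \<phi> a x - zhat \<phi> b x) \<le> real CARD('n) * real CARD('d) * B * norm (a - b)"
proof -
  have B: "B \<ge> 0"
    using assms[of undefined] by linarith
  have "norm (zhat \<phi> a x - zhat \<phi> b x) \<le> (\<Sum>i\<in>UNIV. \<bar>zi \<phi> (a $ i) x - zi \<phi> (b $ i) x\<bar>)"
    using norm_le_l1_cart[of "zhat \<phi> a x - zhat \<phi> b x"] by (simp add: zhat_def)
  also have "\<dots> \<le> (\<Sum>i\<in>(UNIV::'n set). real CARD('d) * B * norm (a - b))"
  proof (rule sum_mono)
    fix i
    have "\<bar>zi \<phi> (a $ i) x - zi \<phi> (b $ i) x\<bar> \<le> real CARD('d) * B * norm (a $ i - b $ i)"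
      by (rule abs_zi_diff_le) (rule assms)
    also have "\<dots> \<le> real CARD('d) * B * norm (a - b)"
      using Finite_Cartesian_Product.norm_nth_le[of "a - b" i] B by (intro mult_left_mono) auto
    finally show "\<bar>zi \<phi> (a $ i) x - zi \<phi> (b $ i) x\<bar> \<le> real CARD('d) * B * norm (a - b)" .
  qed
  finally show ?thesis
    by (simp add: ac_simps)
qed

lemma bounded_Zi:
  fixes \<phi> :: "'d::finite \<Rightarrow> 'x \<Rightarrow> real"
  assumes "\<And>l x. x \<in> XX \<Longrightarrow> \<bar>\<phi> l x\<bar> \<le> B"
  shows "bounded (Zi \<phi> XX R)"
  unfolding bounded_iff
proof (intro exI ballI)
  fix t assume "t \<in> Zi \<phi> XX R"
  then obtain ai x where ai: "norm ai \<le> R" and x: "x \<in> XX" and t: "t = zi \<phi> ai x"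
    by (auto simp: Zi_def)
  have "\<bar>zi \<phi> ai x - zi \<phi> 0 x\<bar> \<le> real CARD('d) * B * norm (ai - 0)"
    using assms x by (intro abs_zi_diff_le) auto
  also have "\<dots> \<le> real CARD('d) * B * R"
    using ai assms[OF x, of undefined] by (intro mult_left_mono) auto
  finally show "norm t \<le> real CARD('d) * B * R"
    by (simp add: t zi_def)
qed

lemma bounded_Zhat:
  fixes \<phi> :: "'d::finite \<Rightarrow> 'x \<Rightarrow> real"
  assumes "\<And>l x. x \<in> XX \<Longrightarrow> \<bar>\<phi> l x\<bar> \<le> B"
  shows "bounded (Zhat \<phi> XX R :: (real^'n) set)"
proof -
  have "bounded (Zi \<phi> XX R)"
    by (rule bounded_Zi) (rule assms)
  then obtain C where C: "\<And>t. t \<in> Zi \<phi> XX R \<Longrightarrow> norm t \<le> C"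
    unfolding bounded_iff by blast
  have "norm z \<le> real CARD('n) * C" if "z \<in> Zhat \<phi> XX R" for z :: "real^'n"
  proof -
    have "norm z \<le> (\<Sum>i\<in>UNIV. \<bar>z $ i\<bar>)"
      by (rule norm_le_l1_cart)
    also have "\<dots> \<le> (\<Sum>i\<in>(UNIV::'n set). C)"
      using that C by (intro sum_mono) (auto simp: Zhat_def)
    finally show ?thesis
      by simp
  qed
  then show ?thesis
    unfolding bounded_iff by blast
qed

lemma bounded_clBN: "bounded (clBN R :: (real^'d^'n) set)"
proof -
  have "norm a \<le> real CARD('n) * R" if "a \<in> clBN R" for a :: "real^'d^'n"
  proof -
    have "norm a \<le> (\<Sum>i\<in>UNIV. norm (a $ i))"
      unfolding norm_vec_def by (rule L2_set_le_sum) simp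
    also have "\<dots> \<le> (\<Sum>i\<in>(UNIV::'n set). R)"
      using that by (intro sum_mono) (auto simp: clBN_def)
    finally show ?thesis
      by simp
  qed
  then show ?thesis
    unfolding bounded_iff by blast
qed

lemma mem_event_E:
  assumes "\<omega> \<in> space M"
    and "\<And>a. a \<in> clBN R \<Longrightarrow> norm (Femp J \<phi> Xs Ys lam \<omega> n a - FF M J \<phi> X Y lam a) < e"
    and "\<And>i ai. ai \<in> cball 0 R \<Longrightarrow> \<bar>hemp h \<phi> Xs Ys i \<omega> n ai - hbar M h \<phi> X Y i ai\<bar> < e"
  shows "\<omega> \<in> event_E M J h \<phi> X Y Xs Ys lam R e n"
proof -
  have "hemp h \<phi> Xs Ys i \<omega> n ai \<le> 0" if "ai \<in> cball 0 R" "hbar M h \<phi> X Y i ai \<le> - e" for i ai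
    using assms(3)[OF that(1), of i] that(2) by (simp add: abs_less_iff)
  moreover have "hbar M h \<phi> X Y i ai \<le> e" if "ai \<in> cball 0 R" "hemp h \<phi> Xs Ys i \<omega> n ai \<le> 0" for i ai
    using assms(3)[OF that(1), of i] that(2) by (simp add: abs_less_iff)
  ultimately show ?thesis
    using assms(1,2) by (auto simp: event_E_def AAeps_def Aemp_def)
qed

text \<open>The samples are the pairs \<open>(Xs k, Ys k)\<close> with values in \<open>XX \<times> YY\<close>; \<open>LF\<close>, \<open>Lh\<close> and \<open>z0\<close>
  are the Lipschitz constants and the point provided by (A2).\<close>
locale sampled_game =
  iid_sample M "\<lambda>\<omega>. (X \<omega>, Y \<omega>)" "\<lambda>k \<omega>. (Xs k \<omega>, Ys k \<omega>)" "XX \<times> YY"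
  for M :: "'w measure" and X :: "'w \<Rightarrow> 'x::euclidean_space" and Y :: "'w \<Rightarrow> 'y::euclidean_space"
    and Xs :: "nat \<Rightarrow> 'w \<Rightarrow> 'x" and Ys :: "nat \<Rightarrow> 'w \<Rightarrow> 'y" and XX :: "'x set" and YY :: "'y set" +
  fixes \<phi> :: "'d::finite \<Rightarrow> 'x \<Rightarrow> real" and J :: "'n::finite \<Rightarrow> real^'n \<Rightarrow> 'y \<Rightarrow> real"
    and h :: "'n \<Rightarrow> real \<Rightarrow> 'y \<Rightarrow> real" and R LF Lh :: real and z0 :: "real^'n"
  assumes compact_XX: "compact XX" and compact_YY: "compact YY"
    and continuous_\<phi>: "\<And>l. continuous_on XX (\<phi> l)"
    and dJ_measurable: "\<And>i z. z \<in> Zhat \<phi> XX R \<Longrightarrow> dJ J i z \<in> borel_measurable borel"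
    and h_measurable: "\<And>i t. t \<in> Zi \<phi> XX R \<Longrightarrow> h i t \<in> borel_measurable borel"
    and Fz_lipschitz: "\<And>y. y \<in> YY \<Longrightarrow> LF-lipschitz_on (Zhat \<phi> XX R) (\<lambda>z. Fz J z y)"
    and h_lipschitz: "\<And>i y. y \<in> YY \<Longrightarrow> Lh-lipschitz_on (Zi \<phi> XX R) (\<lambda>t. h i t y)"
    and z0: "z0 \<in> Zhat \<phi> XX R"
    and Fz_bounded: "bounded ((\<lambda>y. Fz J z0 y) ` YY)"
    and h_bounded: "\<And>i. bounded ((\<lambda>y. h i (z0 $ i) y) ` YY)"
begin

lemma \<phi>_bounded:
  obtains B where "\<And>l x. x \<in> XX \<Longrightarrow> \<bar>\<phi> l x\<bar> \<le> B"
proof -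
  have "bounded (\<Union>l. \<phi> l ` XX)"
    using compact_XX continuous_\<phi>
    by (intro bounded_Union) (auto intro: compact_imp_bounded compact_continuous_image)
  then show ?thesis
    unfolding bounded_iff using that by auto
qed

lemma dJ_lipschitz:
  assumes "y \<in> YY"
  shows "LF-lipschitz_on (Zhat \<phi> XX R) (\<lambda>z. dJ J i z y)"
proof (rule lipschitz_onI)
  fix z z' :: "real^'n"
  assume "z \<in> Zhat \<phi> XX R" "z' \<in> Zhat \<phi> XX R"
  then have "dist (Fz J z y) (Fz J z' y) \<le> LF * dist z z'"
    using lipschitz_onD[OF Fz_lipschitz[OF assms]] by blast
  moreover have "dist (dJ J i z y) (dJ J i z' y) \<le> dist (Fz J z y) (Fz J z' y)"
    using component_le_norm_cart[of "Fz J z y - Fz J z' y" i] by (simp add: dist_norm Fz_def)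
  ultimately show "dist (dJ J i z y) (dJ J i z' y) \<le> LF * dist z z'"
    by linarith
qed (use lipschitz_on_nonneg[OF Fz_lipschitz[OF assms]] in simp)

lemma Fb_integrand:
  obtains B L where
    "\<And>a. a \<in> clBN R \<Longrightarrow>
      (\<lambda>p. if p \<in> XX \<times> YY then Fb J \<phi> a (fst p) (snd p) $ i $ l else 0) \<in> borel_measurable borel"
    "\<And>a x y. a \<in> clBN R \<Longrightarrow> x \<in> XX \<Longrightarrow> y \<in> YY \<Longrightarrow> \<bar>Fb J \<phi> a x y $ i $ l\<bar> \<le> B"
    "\<And>a b x y. a \<in> clBN R \<Longrightarrow> b \<in> clBN R \<Longrightarrow> x \<in> XX \<Longrightarrow> y \<in> YY \<Longrightarrow>
      \<bar>Fb J \<phi> a x y $ i $ l - Fb J \<phi> b x y $ i $ l\<bar> \<le> L * norm (a - b)"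
proof -
  obtain B\<phi> where B\<phi>: "\<And>l x. x \<in> XX \<Longrightarrow> \<bar>\<phi> l x\<bar> \<le> B\<phi>"
    using \<phi>_bounded by blast
  have "bounded (Zhat \<phi> XX R :: (real^'n) set)"
    by (rule bounded_Zhat) (rule B\<phi>)
  from lipschitz_family_bounded[OF Fz_lipschitz this z0 Fz_bounded]
  obtain BF where BF: "\<And>z y. z \<in> Zhat \<phi> XX R \<Longrightarrow> y \<in> YY \<Longrightarrow> norm (Fz J z y) \<le> BF"
    by blast
  have dJ_bound: "\<bar>dJ J i z y\<bar> \<le> BF" if "z \<in> Zhat \<phi> XX R" "y \<in> YY" for z y
    using component_le_norm_cart[of "Fz J z y" i] BF[OF that] by (simp add: Fz_def)
  have zhat_in: "zhat \<phi> a x \<in> Zhat \<phi> XX R" if "a \<in> clBN R" "x \<in> XX" for a x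
    using that by (auto simp: zhat_def Zhat_def Zi_def clBN_def)
  have zhat_lip: "dist (zhat \<phi> a x) (zhat \<phi> b x) \<le> real CARD('n) * real CARD('d) * B\<phi> * norm (a - b)"
    if "x \<in> XX" for a b :: "real^'d^'n" and x
    unfolding dist_norm by (rule norm_zhat_diff_le) (use B\<phi> that in auto)
  have zhat_cont: "continuous_on XX (zhat \<phi> a)" for a
    unfolding zhat_def[abs_def] zi_def using continuous_\<phi> by (intro continuous_intros) auto
  obtain B L where meas: "\<And>a. a \<in> clBN R \<Longrightarrow>
      (\<lambda>p. if p \<in> XX \<times> YY then dJ J i (zhat \<phi> a (fst p)) (snd p) * \<phi> l (fst p) else 0)
        \<in> borel_measurable borel"
    and bound: "\<And>a x y. a \<in> clBN R \<Longrightarrow> x \<in> XX \<Longrightarrow> y \<in> YY \<Longrightarrow> \<bar>dJ J i (zhat \<phi> a x) y * \<phi> l x\<bar> \<le> B"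
    and lip: "\<And>a b x y. a \<in> clBN R \<Longrightarrow> b \<in> clBN R \<Longrightarrow> x \<in> XX \<Longrightarrow> y \<in> YY \<Longrightarrow>
      \<bar>dJ J i (zhat \<phi> a x) y * \<phi> l x - dJ J i (zhat \<phi> b x) y * \<phi> l x\<bar> \<le> L * norm (a - b)"
    by (rule caratheodory_integrand[OF compact_XX compact_imp_closed[OF compact_YY] zhat_in zhat_lip
          zhat_cont continuous_\<phi> dJ_lipschitz dJ_bound dJ_measurable]) blast+
  have Fb_eq: "Fb J \<phi> a x y $ i $ l = dJ J i (zhat \<phi> a x) y * \<phi> l x" for a x y
    by (simp add: Fb_def)
  show ?thesis
    using meas bound lip unfolding Fb_eq[symmetric] by (rule that)
qed

lemma h_integrand:
  obtains B L where
    "\<And>ai. ai \<in> cball 0 R \<Longrightarrow>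
      (\<lambda>p. if p \<in> XX \<times> YY then h i (zi \<phi> ai (fst p)) (snd p) else 0) \<in> borel_measurable borel"
    "\<And>ai x y. ai \<in> cball 0 R \<Longrightarrow> x \<in> XX \<Longrightarrow> y \<in> YY \<Longrightarrow> \<bar>h i (zi \<phi> ai x) y\<bar> \<le> B"
    "\<And>ai bi x y. ai \<in> cball 0 R \<Longrightarrow> bi \<in> cball 0 R \<Longrightarrow> x \<in> XX \<Longrightarrow> y \<in> YY \<Longrightarrow>
      \<bar>h i (zi \<phi> ai x) y - h i (zi \<phi> bi x) y\<bar> \<le> L * norm (ai - bi)"
proof -
  obtain B\<phi> where B\<phi>: "\<And>l x. x \<in> XX \<Longrightarrow> \<bar>\<phi> l x\<bar> \<le> B\<phi>"
    using \<phi>_bounded by blast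
  have z0i: "z0 $ i \<in> Zi \<phi> XX R"
    using z0 by (simp add: Zhat_def)
  have "bounded (Zi \<phi> XX R)"
    by (rule bounded_Zi) (rule B\<phi>)
  from lipschitz_family_bounded[OF h_lipschitz this z0i h_bounded]
  obtain Bh where Bh: "\<And>t y. t \<in> Zi \<phi> XX R \<Longrightarrow> y \<in> YY \<Longrightarrow> \<bar>h i t y\<bar> \<le> Bh"
    by (metis real_norm_def)
  have zi_in: "zi \<phi> ai x \<in> Zi \<phi> XX R" if "ai \<in> cball 0 R" "x \<in> XX" for ai x
    using that by (auto simp: Zi_def)
  have zi_lip: "dist (zi \<phi> ai x) (zi \<phi> bi x) \<le> real CARD('d) * B\<phi> * norm (ai - bi)"
    if "x \<in> XX" for ai bi x
    unfolding dist_real_def by (rule abs_zi_diff_le) (use B\<phi> that in auto)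
  have zi_cont: "continuous_on XX (zi \<phi> ai)" for ai
    unfolding zi_def[abs_def] using continuous_\<phi> by (intro continuous_intros) auto
  obtain B L where
    "\<And>ai. ai \<in> cball 0 R \<Longrightarrow> (\<lambda>p. if p \<in> XX \<times> YY then h i (zi \<phi> ai (fst p)) (snd p) * 1
        else 0) \<in> borel_measurable borel"
    "\<And>ai x y. ai \<in> cball 0 R \<Longrightarrow> x \<in> XX \<Longrightarrow> y \<in> YY \<Longrightarrow> \<bar>h i (zi \<phi> ai x) y * 1\<bar> \<le> B"
    "\<And>ai bi x y. ai \<in> cball 0 R \<Longrightarrow> bi \<in> cball 0 R \<Longrightarrow> x \<in> XX \<Longrightarrow> y \<in> YY \<Longrightarrow>
      \<bar>h i (zi \<phi> ai x) y * 1 - h i (zi \<phi> bi x) y * 1\<bar> \<le> L * norm (ai - bi)"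
    by (rule caratheodory_integrand[OF compact_XX compact_imp_closed[OF compact_YY] zi_in zi_lip
          zi_cont continuous_on_const h_lipschitz Bh h_measurable]) blast+
  then show ?thesis
    unfolding mult_1_right by (rule that)
qed

lemma integrable_Fb_component:
  assumes "a \<in> clBN R"
  shows "integrable M (\<lambda>\<omega>. Fb J \<phi> a (X \<omega>) (Y \<omega>) $ i $ l)"
proof -
  obtain B L where meas: "\<And>a. a \<in> clBN R \<Longrightarrow>
      (\<lambda>p. if p \<in> XX \<times> YY then Fb J \<phi> a (fst p) (snd p) $ i $ l else 0) \<in> borel_measurable borel"
    and bound: "\<And>a x y. a \<in> clBN R \<Longrightarrow> x \<in> XX \<Longrightarrow> y \<in> YY \<Longrightarrow> \<bar>Fb J \<phi> a x y $ i $ l\<bar> \<le> B"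
    and "\<And>a b x y. a \<in> clBN R \<Longrightarrow> b \<in> clBN R \<Longrightarrow> x \<in> XX \<Longrightarrow> y \<in> YY \<Longrightarrow>
      \<bar>Fb J \<phi> a x y $ i $ l - Fb J \<phi> b x y $ i $ l\<bar> \<le> L * norm (a - b)"
    by (rule Fb_integrand[where i = i and l = l]) blast
  have "integrable M (\<lambda>\<omega>. (\<lambda>p. Fb J \<phi> a (fst p) (snd p) $ i $ l) (X \<omega>, Y \<omega>))"
    using assms by (intro integrable_bounded_on_Z[where B = B] meas) (auto intro: bound)
  then show ?thesis
    by simp
qed

lemma Femp_minus_FF_component:
  assumes "a \<in> clBN R"
  shows "(Femp J \<phi> Xs Ys lam \<omega> n a - FF M J \<phi> X Y lam a) $ i $ l
    = deviation (\<lambda>p. Fb J \<phi> a (fst p) (snd p) $ i $ l) n \<omega>"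
  using integral_vec_vec_nth[of M "\<lambda>\<omega>. Fb J \<phi> a (X \<omega>) (Y \<omega>)"] integrable_Fb_component[OF assms]
  by (simp add: Femp_def FF_def FF0_def deviation_def sample_mean_def)

lemma AE_eventually_Femp_component_close:
  assumes "\<epsilon> > 0" "0 < \<alpha>" "\<alpha> < 1/2"
  shows "AE \<omega> in M. \<forall>\<^sub>F n in sequentially. \<forall>a\<in>clBN R.
    \<bar>(Femp J \<phi> Xs Ys lam \<omega> n a - FF M J \<phi> X Y lam a) $ i $ l\<bar> < \<epsilon> * real n powr - \<alpha>"
proof -
  obtain B L where meas: "\<And>a. a \<in> clBN R \<Longrightarrow>
      (\<lambda>p. if p \<in> XX \<times> YY then Fb J \<phi> a (fst p) (snd p) $ i $ l else 0) \<in> borel_measurable borel"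
    and bound: "\<And>a x y. a \<in> clBN R \<Longrightarrow> x \<in> XX \<Longrightarrow> y \<in> YY \<Longrightarrow> \<bar>Fb J \<phi> a x y $ i $ l\<bar> \<le> B"
    and lip: "\<And>a b x y. a \<in> clBN R \<Longrightarrow> b \<in> clBN R \<Longrightarrow> x \<in> XX \<Longrightarrow> y \<in> YY \<Longrightarrow>
      \<bar>Fb J \<phi> a x y $ i $ l - Fb J \<phi> b x y $ i $ l\<bar> \<le> L * norm (a - b)"
    by (rule Fb_integrand[where i = i and l = l]) blast
  have "AE \<omega> in M. \<forall>\<^sub>F n in sequentially. \<forall>a\<in>clBN R.
    \<bar>deviation (\<lambda>p. Fb J \<phi> a (fst p) (snd p) $ i $ l) n \<omega>\<bar> < \<epsilon> * real n powr - \<alpha>"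
    by (rule AE_eventually_uniform_deviation_less[OF bounded_clBN meas _ _ assms, where B = B and L = L])
      (auto intro: bound lip)
  then show ?thesis
    by (simp add: Femp_minus_FF_component del: vector_minus_component)
qed

lemma AE_eventually_Femp_close:
  assumes \<epsilon>: "\<epsilon> > 0" and \<alpha>: "0 < \<alpha>" "\<alpha> < 1/2"
  shows "AE \<omega> in M. \<forall>\<^sub>F n in sequentially. \<forall>a\<in>clBN R.
    norm (Femp J \<phi> Xs Ys lam \<omega> n a - FF M J \<phi> X Y lam a) < \<epsilon> * real n powr - \<alpha>"
proof -
  define \<delta> where "\<delta> = \<epsilon> / (real CARD('n) * real CARD('d))"
  have "\<delta> > 0"
    using \<epsilon> by (simp add: \<delta>_def)
  then have "AE \<omega> in M. \<forall>p\<in>UNIV. \<forall>\<^sub>F n in sequentially. \<forall>a\<in>clBN R.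
    \<bar>(Femp J \<phi> Xs Ys lam \<omega> n a - FF M J \<phi> X Y lam a) $ fst p $ snd p\<bar> < \<delta> * real n powr - \<alpha>"
    using \<alpha> by (intro AE_finite_allI AE_eventually_Femp_component_close) auto
  then show ?thesis
  proof (rule eventually_mono)
    fix \<omega>
    assume "\<forall>p\<in>UNIV. \<forall>\<^sub>F n in sequentially. \<forall>a\<in>clBN R.
      \<bar>(Femp J \<phi> Xs Ys lam \<omega> n a - FF M J \<phi> X Y lam a) $ fst p $ snd p\<bar> < \<delta> * real n powr - \<alpha>"
    then have "\<forall>\<^sub>F n in sequentially. \<forall>p::'n \<times> 'd. \<forall>a\<in>clBN R.
      \<bar>(Femp J \<phi> Xs Ys lam \<omega> n a - FF M J \<phi> X Y lam a) $ fst p $ snd p\<bar> < \<delta> * real n powr - \<alpha>"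
      by (intro eventually_all_finite) simp
    then show "\<forall>\<^sub>F n in sequentially. \<forall>a\<in>clBN R.
      norm (Femp J \<phi> Xs Ys lam \<omega> n a - FF M J \<phi> X Y lam a) < \<epsilon> * real n powr - \<alpha>"
    proof (rule eventually_mono, intro ballI)
      fix n :: nat and a :: "real^'d^'n"
      assume "\<forall>p::'n \<times> 'd. \<forall>a\<in>clBN R.
        \<bar>(Femp J \<phi> Xs Ys lam \<omega> n a - FF M J \<phi> X Y lam a) $ fst p $ snd p\<bar> < \<delta> * real n powr - \<alpha>"
        and "a \<in> clBN R"
      then have "norm (Femp J \<phi> Xs Ys lam \<omega> n a - FF M J \<phi> X Y lam a)
          < real CARD('n) * real CARD('d) * (\<delta> * real n powr - \<alpha>)"
        by (intro norm_vec_vec_less) (metis fst_conv snd_conv)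
      then show "norm (Femp J \<phi> Xs Ys lam \<omega> n a - FF M J \<phi> X Y lam a) < \<epsilon> * real n powr - \<alpha>"
        by (simp add: \<delta>_def)
    qed
  qed
qed

lemma AE_eventually_hemp_close:
  assumes "\<epsilon> > 0" "0 < \<alpha>" "\<alpha> < 1/2"
  shows "AE \<omega> in M. \<forall>\<^sub>F n in sequentially. \<forall>i. \<forall>ai\<in>cball 0 R.
    \<bar>hemp h \<phi> Xs Ys i \<omega> n ai - hbar M h \<phi> X Y i ai\<bar> < \<epsilon> * real n powr - \<alpha>"
proof -
  have "AE \<omega> in M. \<forall>\<^sub>F n in sequentially. \<forall>ai\<in>cball 0 R.
    \<bar>hemp h \<phi> Xs Ys i \<omega> n ai - hbar M h \<phi> X Y i ai\<bar> < \<epsilon> * real n powr - \<alpha>" for i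
  proof -
    obtain B L where meas: "\<And>ai. ai \<in> cball 0 R \<Longrightarrow>
        (\<lambda>p. if p \<in> XX \<times> YY then h i (zi \<phi> ai (fst p)) (snd p) else 0) \<in> borel_measurable borel"
      and bound: "\<And>ai x y. ai \<in> cball 0 R \<Longrightarrow> x \<in> XX \<Longrightarrow> y \<in> YY \<Longrightarrow> \<bar>h i (zi \<phi> ai x) y\<bar> \<le> B"
      and lip: "\<And>ai bi x y. ai \<in> cball 0 R \<Longrightarrow> bi \<in> cball 0 R \<Longrightarrow> x \<in> XX \<Longrightarrow> y \<in> YY \<Longrightarrow>
        \<bar>h i (zi \<phi> ai x) y - h i (zi \<phi> bi x) y\<bar> \<le> L * norm (ai - bi)"
      by (rule h_integrand[where i = i]) blast
    have "AE \<omega> in M. \<forall>\<^sub>F n in sequentially. \<forall>ai\<in>cball 0 R.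
      \<bar>deviation (\<lambda>p. h i (zi \<phi> ai (fst p)) (snd p)) n \<omega>\<bar> < \<epsilon> * real n powr - \<alpha>"
      by (rule AE_eventually_uniform_deviation_less[OF bounded_cball meas _ _ assms, where B = B and L = L])
        (auto intro: bound lip)
    then show ?thesis
      by (simp add: hemp_def hbar_def deviation_def sample_mean_def)
  qed
  then have "AE \<omega> in M. \<forall>i\<in>UNIV. \<forall>\<^sub>F n in sequentially. \<forall>ai\<in>cball 0 R.
    \<bar>hemp h \<phi> Xs Ys i \<omega> n ai - hbar M h \<phi> X Y i ai\<bar> < \<epsilon> * real n powr - \<alpha>"
    by (intro AE_finite_allI) auto
  then show ?thesis
    by (rule eventually_mono) (intro eventually_all_finite, simp)
qed

lemma AE_eventually_event_E:
  assumes "\<epsilon> > 0" "0 < \<alpha>" "\<alpha> < 1/2"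
  shows "AE \<omega> in M. \<forall>\<^sub>F n in sequentially. \<omega> \<in> event_E M J h \<phi> X Y Xs Ys lam R (\<epsilon> * real n powr - \<alpha>) n"
  using AE_eventually_Femp_close[OF assms, where lam = lam] AE_eventually_hemp_close[OF assms] AE_space
proof eventually_elim
  case (elim \<omega>)
  from eventually_conj[OF elim(1,2)] show ?case
    by (rule eventually_mono) (use elim(3) in \<open>auto intro!: mem_event_E\<close>)
qed

end

theorem theorem1:
  fixes M :: "'w measure"
    and XX :: "'x::euclidean_space set" and YY :: "'y::euclidean_space set"
    and X :: "'w \<Rightarrow> 'x" and Y :: "'w \<Rightarrow> 'y"
    and Xs :: "nat \<Rightarrow> 'w \<Rightarrow> 'x" and Ys :: "nat \<Rightarrow> 'w \<Rightarrow> 'y"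
    and \<phi> :: "'d::finite \<Rightarrow> 'x \<Rightarrow> real"
    and J :: "'n::finite \<Rightarrow> real^'n \<Rightarrow> 'y \<Rightarrow> real"
    and h :: "'n \<Rightarrow> real \<Rightarrow> 'y \<Rightarrow> real"
    and R lam \<epsilon>h \<epsilon>d \<alpha> :: real
  assumes P: "prob_space M"
    and R: "R > 0" and lam: "lam > 0"
    and XXc: "compact XX" and YYc: "compact YY"
    and Xrv: "X \<in> borel_measurable M" and Xval: "\<forall>\<omega>\<in>space M. X \<omega> \<in> XX"
    and Yrv: "Y \<in> borel_measurable M" and Yval: "\<forall>\<omega>\<in>space M. Y \<omega> \<in> YY"
    and phi_cont: "\<forall>l. continuous_on XX (\<phi> l)"
    \<comment> \<open>(X^k,Y^k), k \<ge> 1, are i.i.d. copies of (X,Y)\<close>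
    and Xsrv: "\<forall>k. Xs k \<in> borel_measurable M" and Xsval: "\<forall>k. \<forall>\<omega>\<in>space M. Xs k \<omega> \<in> XX"
    and Ysrv: "\<forall>k. Ys k \<in> borel_measurable M" and Ysval: "\<forall>k. \<forall>\<omega>\<in>space M. Ys k \<omega> \<in> YY"
    and indep: "prob_space.indep_vars M (\<lambda>_. borel) (\<lambda>k \<omega>. (Xs k \<omega>, Ys k \<omega>)) {1..}"
    and ident: "\<forall>k\<ge>1. distr M borel (\<lambda>\<omega>. (Xs k \<omega>, Ys k \<omega>)) = distr M borel (\<lambda>\<omega>. (X \<omega>, Y \<omega>))"
    \<comment> \<open>implicit measurability of the data in y\<close>
    and dJ_meas: "\<forall>i. \<forall>z \<in> Zhat \<phi> XX R. (\<lambda>y. dJ J i z y) \<in> borel_measurable borel"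
    and h_meas: "\<forall>i. \<forall>t \<in> Zi \<phi> XX R. (\<lambda>y. h i t y) \<in> borel_measurable borel"
    \<comment> \<open>(A1)\<close>
    and A1: "\<forall>i z y. (\<lambda>t. J i (vupd z i t) y) C1_differentiable_on UNIV"
    \<comment> \<open>(A2)\<close>
    and A2: "\<exists>LF Lh.
        (\<forall>y\<in>YY. LF-lipschitz_on (Zhat \<phi> XX R) (\<lambda>z. Fz J z y))
      \<and> (\<forall>i. \<forall>y\<in>YY. Lh-lipschitz_on (Zi \<phi> XX R) (\<lambda>t. h i t y))
      \<and> (\<exists>z \<in> Zhat \<phi> XX R. bounded ((\<lambda>y. Fz J z y) ` YY)
            \<and> (\<forall>i. bounded ((\<lambda>y. h i (z $ i) y) ` YY)))"
    \<comment> \<open>(A4)\<close>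
    and eh: "\<epsilon>h > 0"
    and A4: "\<forall>i. {ai \<in> cball 0 R. hbar M h \<phi> X Y i ai \<le> - \<epsilon>h} \<noteq> {}"
    \<comment> \<open>the constant epsilon_diamond\<close>
    and ed: "0 < \<epsilon>d" "\<epsilon>d < \<epsilon>h"
    and rateF: "\<forall>a \<in> clBN R. \<forall>i l.
        rate_lb M (\<lambda>\<omega>. Fb J \<phi> a (X \<omega>) (Y \<omega>) $ i $ l - FF0 M J \<phi> X Y a $ i $ l) \<epsilon>d"
    and rateh: "\<forall>a \<in> clBN R. \<forall>i.
        rate_lb M (\<lambda>\<omega>. h i (zi \<phi> (a $ i) (X \<omega>)) (Y \<omega>) - hbar M h \<phi> X Y i (a $ i)) \<epsilon>d"
    and alpha: "0 < \<alpha>" "\<alpha> < 1/2"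
  shows "(AE \<omega> in M. \<not> (\<exists>\<^sub>F n in sequentially.
            \<omega> \<notin> event_E M J h \<phi> X Y Xs Ys lam R (\<epsilon>d * real n powr (- \<alpha>)) n))
    \<and> (\<exists>\<Omega>t \<in> sets M. measure M \<Omega>t = 1 \<and>
         (\<forall>\<omega>\<in>\<Omega>t. \<exists>n\<omega>::nat. n\<omega> \<ge> 1 \<and>
            (\<forall>n>n\<omega>. \<omega> \<in> event_E M J h \<phi> X Y Xs Ys lam R (\<epsilon>d * real n powr (- \<alpha>)) n)))"
proof -
  obtain LF Lh z0 where LF: "\<forall>y\<in>YY. LF-lipschitz_on (Zhat \<phi> XX R) (\<lambda>z. Fz J z y)"
    and Lh: "\<forall>i. \<forall>y\<in>YY. Lh-lipschitz_on (Zi \<phi> XX R) (\<lambda>t. h i t y)"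
    and z0: "z0 \<in> Zhat \<phi> XX R" "bounded ((\<lambda>y. Fz J z0 y) ` YY)"
      "\<forall>i. bounded ((\<lambda>y. h i (z0 $ i) y) ` YY)"
    using A2 by blast
  interpret prob_space M
    by (rule P)
  interpret sampled_game M X Y Xs Ys XX YY \<phi> J h R LF Lh z0
  proof unfold_locales
    show "(\<lambda>\<omega>. (X \<omega>, Y \<omega>)) \<in> borel_measurable M"
      using Xrv Yrv by (rule borel_measurable_Pair)
    show "(X \<omega>, Y \<omega>) \<in> XX \<times> YY" "(Xs k \<omega>, Ys k \<omega>) \<in> XX \<times> YY" if "\<omega> \<in> space M" for k \<omega>
      using Xval Yval Xsval Ysval that by auto
    show "distr M borel (\<lambda>\<omega>. (Xs k \<omega>, Ys k \<omega>)) = distr M borel (\<lambda>\<omega>. (X \<omega>, Y \<omega>))" if "k \<ge> 1" for k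
      using ident that by blast
    show "dJ J i z \<in> borel_measurable borel" if "z \<in> Zhat \<phi> XX R" for i z
      using dJ_meas that by blast
    show "h i t \<in> borel_measurable borel" if "t \<in> Zi \<phi> XX R" for i t
      using h_meas that by blast
    show "LF-lipschitz_on (Zhat \<phi> XX R) (\<lambda>z. Fz J z y)" if "y \<in> YY" for y
      using LF that by blast
    show "Lh-lipschitz_on (Zi \<phi> XX R) (\<lambda>t. h i t y)" if "y \<in> YY" for i y
      using Lh that by blast
    show "bounded ((\<lambda>y. h i (z0 $ i) y) ` YY)" for i
      using z0(3) by blast
  qed (fact indep XXc YYc phi_cont[rule_format] z0(1,2))+
  have "AE \<omega> in M. \<forall>\<^sub>F n in sequentially. \<omega> \<in> event_E M J h \<phi> X Y Xs Ys lam R (\<epsilon>d * real n powr - \<alpha>) n"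
    by (rule AE_eventually_event_E[OF ed(1) alpha])
  then show ?thesis
    using AE_eventually_imp_prob_one_set by (simp add: not_frequently)
qed

end
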